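(* Let $\mathbf a=(a_0,\dots,a_n)$ with $-1\le a_0<a_1<\dots<a_n\le1$ and $a_{i+1}-a_i>2b$. Then the sets $U^{\mathbf a}_{n,0},U^{\mathbf a}_{n-1,1},\dots,U^{\mathbf a}_{0,n}$ form an open cover of $\mathrm{Sym}^n\mathbb R$. Similarly, the smoothed sets $U^{\mathbf a,\delta}_{n,0},\dots,U^{\mathbf a,\delta}_{0,n}$ form an open cover of $\mathrm{Sym}^n\mathbb R$ for $0<\delta\ll b$.
   Context: Fix $b>0$. For $\mathbf z\in\mathrm{Sym}^m\mathbb R$ nonempty, $c(\mathbf z)$ is the average of its points and its box is $B_{\mathbf z}=[c(\mathbf z)-|\mathbf z|b,\,c(\mathbf z)+|\mathbf z|b]$. $\mathbf z$ is well contained in $B_{\mathbf z}$ if $B_{\mathbf z'}\subset B_{\mathbf z}$ for every consecutive subset $\mathbf z'=\{x_p,\dots,x_q\}$ of $\mathbf z=(x_1\le\dots\le x_m)$. The box decomposition of $\mathbf z$ is the unique decomposition $\mathbf z=\mathbf z_1+\dots+\mathbf z_r$ into parts well contained in their boxes with the boxes $B_{\mathbf z_i}$ pairwise disjoint and ordered. $U^{\mathbf a}_{i,n-i}\subset\mathrm{Sym}^n\mathbb R$ is the set of $\mathbf z$ such that $a_i$ lies in the complement of the union of the boxes of the box decomposition of $\mathbf z$ and exactly $i$ points of $\mathbf z$ lie to the left of $a_i$. For the smoothed version, write $\mathbf x=(x_1\le\dots\le x_n)$, $x_{[p,q]}$ for the average of $x_p,\dots,x_q$, and $\rho^{\mathbf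 a,\delta}_{k,n-k}=M_\delta\big(\{x_{[k-i,k]}+(i+1)b-a_k\}_{i=0}^{k-1},\{a_k-x_{[k+1,k+1+i]}+(i+1)b\}_{i=0}^{n-k-1}\big)$, $U^{\mathbf a,\delta}_{k,n-k}=\{\rho^{\mathbf a,\delta}_{k,n-k}<0\}$, where $M_\delta$ is the regularized maximum $M_\delta(t_1,\dots,t_p)=\int_{\mathbb R^p}\max_j\{t_j+h_j\}\prod_j\theta(h_j/\delta)\delta^{-1}dh_j$ for a fixed smooth nonnegative $\theta$ supported in $[-1,1]$ with $\int\theta=1$ and $\int h\theta(h)dh=0$. *)

theory Defs
  imports "HOL-Analysis.Analysis" "HOL-Library.Multiset"
begin

text \<open>Points of Sym^n R are represented as real multisets of size n.\<close>

text \<open>Quotient topology on Sym^n R: U is open iff its preimage under the quotient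
  map R^n \<rightarrow> Sym^n R is open. R^n is the subspace of nat \<Rightarrow> real (product topology)
  of functions vanishing at indices \<ge> n.\<close>
definition sym_open :: "nat \<Rightarrow> real multiset set \<Rightarrow> bool" where
  "sym_open n U \<longleftrightarrow> U \<subseteq> {z. size z = n} \<and>
     openin (top_of_set {x :: nat \<Rightarrow> real. \<forall>i\<ge>n. x i = 0})
       {x. (\<forall>i\<ge>n. x i = 0) \<and> mset (map x [0..<n]) \<in> U}"

definition ctr :: "real multiset \<Rightarrow> real" where
  "ctr z = sum_mset z / real (size z)"

definition box :: "real \<Rightarrow> real multiset \<Rightarrow> real set" where
  "box b z = {ctr z - real (size z) * b .. ctr z + real (size z) * b}"

text \<open>consecutive subsets {x_p,...,x_q} of the sorted points (0-based indices)\<close>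
definition well_contained :: "real \<Rightarrow> real multiset \<Rightarrow> bool" where
  "well_contained b z \<longleftrightarrow>
     (\<forall>p q. p \<le> q \<and> q < size z \<longrightarrow>
        box b (mset (take (Suc q - p) (drop p (sorted_list_of_multiset z)))) \<subseteq> box b z)"

definition is_box_decomp :: "real \<Rightarrow> real multiset \<Rightarrow> real multiset list \<Rightarrow> bool" where
  "is_box_decomp b z zs \<longleftrightarrow> sum_list zs = z \<and>
     (\<forall>w\<in>set zs. w \<noteq> {#} \<and> well_contained b w) \<and>
     (\<forall>i j. i < j \<and> j < length zs \<longrightarrow> (\<forall>u\<in>box b (zs!i). \<forall>v\<in>box b (zs!j). u < v))"

definition box_decomp :: "real \<Rightarrow> real multiset \<Rightarrow> real multiset list" where
  "box_decomp b z = (THE zs. is_box_decomp b z zs)"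

text \<open>U^a_{i,n-i}\<close>
definition U_set :: "real \<Rightarrow> (nat \<Rightarrow> real) \<Rightarrow> nat \<Rightarrow> nat \<Rightarrow> real multiset set" where
  "U_set b a n i = {z. size z = n \<and>
     a i \<notin> (\<Union>w\<in>set (box_decomp b z). box b w) \<and>
     size (filter_mset (\<lambda>x. x < a i) z) = i}"

definition smooth_bump :: "(real \<Rightarrow> real) \<Rightarrow> bool" where
  "smooth_bump \<theta> \<longleftrightarrow> (\<forall>k x. ((deriv ^^ k) \<theta>) differentiable (at x)) \<and>
     (\<forall>h. 0 \<le> \<theta> h) \<and> (\<forall>h. \<bar>h\<bar> > 1 \<longrightarrow> \<theta> h = 0) \<and>
     (\<theta> has_integral 1) UNIV \<and> ((\<lambda>h. h * \<theta> h) has_integral 0) UNIV"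

definition reg_max :: "(real \<Rightarrow> real) \<Rightarrow> real \<Rightarrow> real list \<Rightarrow> real" where
  "reg_max \<theta> \<delta> ts = integral\<^sup>L (PiM {..<length ts} (\<lambda>_. lborel))
     (\<lambda>h. Max ((\<lambda>j. ts!j + h j) ` {..<length ts}) * (\<Prod>j<length ts. \<theta> (h j / \<delta>) / \<delta>))"

text \<open>x_[p,q] for the sorted list xs with 1-based indices\<close>
definition avg :: "real list \<Rightarrow> nat \<Rightarrow> nat \<Rightarrow> real" where
  "avg xs p q = (\<Sum>j=p..q. xs ! (j - 1)) / real (q - p + 1)"

definition rho :: "(real \<Rightarrow> real) \<Rightarrow> real \<Rightarrow> real \<Rightarrow> (nat \<Rightarrow> real) \<Rightarrow> nat \<Rightarrow> nat
    \<Rightarrow> real multiset \<Rightarrow> real" where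
  "rho \<theta> \<delta> b a n k z = (let xs = sorted_list_of_multiset z in
     reg_max \<theta> \<delta>
       ([avg xs (k - i) k + real (i + 1) * b - a k. i \<leftarrow> [0..<k]] @
        [a k - avg xs (k + 1) (k + 1 + i) + real (i + 1) * b. i \<leftarrow> [0..<n - k]]))"

text \<open>U^{a,delta}_{k,n-k}\<close>
definition U_smooth :: "(real \<Rightarrow> real) \<Rightarrow> real \<Rightarrow> real \<Rightarrow> (nat \<Rightarrow> real) \<Rightarrow> nat \<Rightarrow> nat
    \<Rightarrow> real multiset set" where
  "U_smooth \<theta> \<delta> b a n k = {z. size z = n \<and> rho \<theta> \<delta> b a n k z < 0}"

end

(* Write the sorted points as x_1 <= ... <= x_n.  The box decomposition is the unique partition
   of this list into consecutive blocks that are well contained in their boxes and whose boxes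
   are strictly ordered.  It is built greedily, merging the last block with the next point
   whenever their boxes meet, since two well-contained blocks whose boxes meet merge into a
   well-contained block.  Consequently a_k lies outside all boxes with exactly k points to its
   left iff every block of consecutive points ending at x_k has its box to the left of a_k and
   every block starting at x_(k+1) has its box to the right of a_k; this says exactly that all
   arguments of the maximum defining rho_(k,n-k) are negative.

   These arguments are averages of sorted points, hence 1-Lipschitz in the sup norm, and so is
   sorting; as M_delta is 1-Lipschitz too, both kinds of sets are open.  For the covering, take
   eps > 0 with a_(i+1) - a_i >= 2b + 2eps and let k minimise the potential
   x_1 + ... + x_k - sum_(j<k) (a_j + b + eps): comparing with the other cuts shows that all
   arguments of rho_(k,n-k) are at most -eps.  Since M_delta exceeds the maximum by at most
   delta, the smoothed sets cover as soon as delta < eps. *)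

theory Submission
  imports Defs
begin

section \<open>Means and boxes of lists\<close>

definition mean :: "real list \<Rightarrow> real" where
  "mean ys = sum_list ys / real (length ys)"

definition box_lo :: "real \<Rightarrow> real list \<Rightarrow> real" where
  "box_lo b ys = mean ys - real (length ys) * b"

definition box_hi :: "real \<Rightarrow> real list \<Rightarrow> real" where
  "box_hi b ys = mean ys + real (length ys) * b"

lemma box_lo_le_box_hi: "b \<ge> 0 \<Longrightarrow> box_lo b ys \<le> box_hi b ys"
  unfolding box_lo_def box_hi_def by simp

lemma box_singleton: "box_lo b [x] = x - b" "box_hi b [x] = x + b"
  unfolding box_lo_def box_hi_def mean_def by simp_all

lemma compare_by_diff_eq_pos_mult:
  fixes x y c u v :: real
  assumes "x - y = c * (u - v)" "c > 0"
  shows "y \<le> x \<longleftrightarrow> v \<le> u" "x \<le> y \<longleftrightarrow> u \<le> v" "y < x \<longleftrightarrow> v < u"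
proof -
  have "0 \<le> x - y \<longleftrightarrow> 0 \<le> u - v" "x - y \<le> 0 \<longleftrightarrow> u - v \<le> 0" "0 < x - y \<longleftrightarrow> 0 < u - v"
    using assms by (simp_all add: zero_le_mult_iff mult_le_0_iff zero_less_mult_iff)
  then show "y \<le> x \<longleftrightarrow> v \<le> u" "x \<le> y \<longleftrightarrow> u \<le> v" "y < x \<longleftrightarrow> v < u"
    by linarith+
qed

context
  fixes X Y :: "real list"
  assumes nonempty: "X \<noteq> []" "Y \<noteq> []"
begin

lemma length_weights_pos:
  "0 < real (length X) / real (length X + length Y)"
  "0 < real (length Y) / real (length X + length Y)"
proof -
  have "0 < real (length X)" "0 < real (length Y)" using nonempty by auto
  then show "0 < real (length X) / real (length X + length Y)"
    and "0 < real (length Y) / real (length X + length Y)"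
    by (metis add_pos_pos divide_pos_pos of_nat_add)+
qed

lemma mean_append:
  "mean (X @ Y) = (real (length X) * mean X + real (length Y) * mean Y) / real (length X + length Y)"
  using nonempty by (simp add: mean_def)

lemma length_add_ne_zero: "real (length X) + real (length Y) \<noteq> 0"
  using length_weights_pos(1) by auto

lemma box_hi_append_minus_right:
  "box_hi b (X @ Y) - box_hi b Y =
    real (length X) / real (length X + length Y) * (box_hi b X - box_lo b Y)"
  using length_add_ne_zero unfolding box_hi_def box_lo_def mean_append by (simp add: field_simps)

lemma box_lo_append_minus_left:
  "box_lo b (X @ Y) - box_lo b X =
    real (length Y) / real (length X + length Y) * (box_lo b Y - box_hi b X)"
  using length_add_ne_zero unfolding box_hi_def box_lo_def mean_append by (simp add: field_simps)

lemma box_hi_append_minus_left: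
  "box_hi b (X @ Y) - box_hi b X = real (length Y) / real (length X + length Y) *
    (mean Y - mean X + real (length X + length Y) * b)"
  using length_add_ne_zero unfolding box_hi_def box_lo_def mean_append by (simp add: field_simps)

lemma box_lo_append_minus_right:
  "box_lo b (X @ Y) - box_lo b Y = real (length X) / real (length X + length Y) *
    (mean X - mean Y - real (length X + length Y) * b)"
  using length_add_ne_zero unfolding box_hi_def box_lo_def mean_append by (simp add: field_simps)

lemma box_hi_right_le_append_iff: "box_hi b Y \<le> box_hi b (X @ Y) \<longleftrightarrow> box_lo b Y \<le> box_hi b X"
  using compare_by_diff_eq_pos_mult(1)[OF box_hi_append_minus_right length_weights_pos(1)] .

lemma box_hi_append_le_right_iff: "box_hi b (X @ Y) \<le> box_hi b Y \<longleftrightarrow> box_hi b X \<le> box_lo b Y"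
  using compare_by_diff_eq_pos_mult(2)[OF box_hi_append_minus_right length_weights_pos(1)] .

lemma box_lo_left_le_append_iff: "box_lo b X \<le> box_lo b (X @ Y) \<longleftrightarrow> box_hi b X \<le> box_lo b Y"
  using compare_by_diff_eq_pos_mult(1)[OF box_lo_append_minus_left length_weights_pos(2)] .

lemma box_lo_left_less_append_iff: "box_lo b X < box_lo b (X @ Y) \<longleftrightarrow> box_hi b X < box_lo b Y"
  using compare_by_diff_eq_pos_mult(3)[OF box_lo_append_minus_left length_weights_pos(2)] .

lemma box_lo_append_le_left_iff: "box_lo b (X @ Y) \<le> box_lo b X \<longleftrightarrow> box_lo b Y \<le> box_hi b X"
  using compare_by_diff_eq_pos_mult(2)[OF box_lo_append_minus_left length_weights_pos(2)] .

lemma box_hi_left_le_append: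
  assumes "mean X \<le> mean Y" "b \<ge> 0"
  shows "box_hi b X \<le> box_hi b (X @ Y)"
proof -
  have "0 \<le> box_hi b (X @ Y) - box_hi b X"
    unfolding box_hi_append_minus_left
    using length_weights_pos(2) assms by (intro mult_nonneg_nonneg) auto
  then show ?thesis by simp
qed

lemma box_lo_append_le_right:
  assumes "mean X \<le> mean Y" "b \<ge> 0"
  shows "box_lo b (X @ Y) \<le> box_lo b Y"
proof -
  have "0 \<le> real (length X + length Y) * b" using assms(2) by simp
  then have "box_lo b (X @ Y) - box_lo b Y \<le> 0"
    unfolding box_lo_append_minus_right
    using length_weights_pos(1) assms(1) by (intro mult_nonneg_nonpos) auto
  then show ?thesis by simp
qed

end

lemma sum_list_le_length_mult:
  fixes X :: "real list"
  shows "(\<forall>x\<in>set X. x \<le> c) \<Longrightarrow> sum_list X \<le> real (length X) * c"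
  by (induction X) (auto simp: algebra_simps)

lemma length_mult_le_sum_list:
  fixes X :: "real list"
  shows "(\<forall>x\<in>set X. c \<le> x) \<Longrightarrow> real (length X) * c \<le> sum_list X"
  by (induction X) (auto simp: algebra_simps)

lemma mean_le_of_sorted_append:
  assumes "sorted (X @ Y)" "X \<noteq> []" "Y \<noteq> []"
  shows "mean X \<le> mean Y"
proof -
  obtain y Y' where Y: "Y = y # Y'" using assms(3) by (cases Y) auto
  have "sum_list X \<le> real (length X) * y"
    using assms(1) Y by (intro sum_list_le_length_mult) (simp add: sorted_append)
  moreover have "real (length Y) * y \<le> sum_list Y"
    using assms(1) Y by (intro length_mult_le_sum_list) (simp add: sorted_append)
  ultimately have "mean X \<le> y" "y \<le> mean Y"
    using assms(2,3) by (simp_all add: mean_def pos_divide_le_eq pos_le_divide_eq mult.commute)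
  then show ?thesis by linarith
qed

lemma mean_overlap_propagates:
  fixes p q r u v w b :: real
  assumes pos: "p > 0" "q > 0" "r > 0"
    and uv: "v - u \<le> (p + q) * b" and w: "w - (p * u + q * v) / (p + q) \<le> (p + q + r) * b"
  shows "(q * v + r * w) / (q + r) - u \<le> (p + q + r) * b"
proof -
  define s where "s = q * (v - u) / (p + q)"
  have "q * (v - u) \<le> q * ((p + q) * b)"
    using uv pos by (intro mult_left_mono) auto
  then have s_le: "s \<le> q * b"
    using pos unfolding s_def by (simp add: pos_divide_le_eq mult.commute mult.left_commute)
  have "(p * u + q * v) / (p + q) = u + s"
    using pos unfolding s_def by (simp add: field_simps)
  then have "r * (w - u) \<le> r * s + r * ((p + q + r) * b)"
    using w pos(3) by (simp add: distrib_left[symmetric])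
  moreover have "q * (v - u) + r * s = (p + q + r) * s"
    using pos unfolding s_def by (simp add: field_simps)
  ultimately have "q * (v - u) + r * (w - u) \<le> (p + q + r) * s + r * ((p + q + r) * b)"
    by linarith
  also have "\<dots> \<le> (p + q + r) * (q * b) + r * ((p + q + r) * b)"
    using s_le pos by simp
  also have "\<dots> = (q + r) * ((p + q + r) * b)"
    by (simp add: algebra_simps)
  finally have "(q * (v - u) + r * (w - u)) / (q + r) \<le> (p + q + r) * b"
    using pos by (simp add: divide_le_eq mult.commute)
  moreover have "(q * v + r * w) / (q + r) - u = (q * (v - u) + r * (w - u)) / (q + r)"
    using pos by (simp add: field_simps)
  ultimately show ?thesis by simp
qed

lemma box_overlap_extend_right:
  assumes ne: "X \<noteq> []" "Y \<noteq> []" "Z \<noteq> []"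
    and "box_lo b Y \<le> box_hi b X" "box_lo b Z \<le> box_hi b (X @ Y)"
  shows "box_lo b (Y @ Z) \<le> box_hi b X"
proof -
  define p q r where "p = real (length X)" "q = real (length Y)" "r = real (length Z)"
  have pos: "p > 0" "q > 0" "r > 0" using ne unfolding p_q_r_def by auto
  have "mean Y - mean X \<le> (p + q) * b"
    using assms(4) unfolding box_lo_def box_hi_def p_q_r_def by (simp add: algebra_simps)
  moreover have "mean Z - (p * mean X + q * mean Y) / (p + q) \<le> (p + q + r) * b"
    using assms(5) unfolding box_lo_def box_hi_def p_q_r_def mean_append[OF ne(1,2)]
    by (simp add: algebra_simps)
  ultimately have "(q * mean Y + r * mean Z) / (q + r) - mean X \<le> (p + q + r) * b"
    by (rule mean_overlap_propagates[OF pos])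
  then show ?thesis
    unfolding box_lo_def box_hi_def mean_append[OF ne(2,3)] p_q_r_def by (simp add: algebra_simps)
qed

lemma box_overlap_extend_left:
  assumes ne: "X \<noteq> []" "Y \<noteq> []" "Z \<noteq> []"
    and "box_lo b Z \<le> box_hi b Y" "box_lo b (Y @ Z) \<le> box_hi b X"
  shows "box_lo b Z \<le> box_hi b (X @ Y)"
proof -
  \<comment> \<open>box_overlap_extend_right for the reflected lists, in terms of the negated means\<close>
  define p q r where "p = real (length Z)" "q = real (length Y)" "r = real (length X)"
  have pos: "p > 0" "q > 0" "r > 0" using ne unfolding p_q_r_def by auto
  have "- mean Y - - mean Z \<le> (p + q) * b"
    using assms(4) unfolding box_lo_def box_hi_def p_q_r_def by (simp add: algebra_simps)
  moreover have "(p * - mean Z + q * - mean Y) / (p + q) = - mean (Y @ Z)"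
    unfolding mean_append[OF ne(2,3)] p_q_r_def by (simp add: add.commute minus_divide_left)
  then have "- mean X - (p * - mean Z + q * - mean Y) / (p + q) \<le> (p + q + r) * b"
    using assms(5) unfolding box_lo_def box_hi_def p_q_r_def by (simp add: algebra_simps)
  ultimately have "(q * - mean Y + r * - mean X) / (q + r) - - mean Z \<le> (p + q + r) * b"
    by (rule mean_overlap_propagates[OF pos])
  moreover have "(q * - mean Y + r * - mean X) / (q + r) = - mean (X @ Y)"
    unfolding mean_append[OF ne(1,2)] p_q_r_def by (simp add: add.commute minus_divide_left)
  ultimately show ?thesis
    unfolding box_lo_def box_hi_def p_q_r_def by (simp add: algebra_simps)
qed

section \<open>Well-contained lists\<close>

definition well_contained_list :: "real \<Rightarrow> real list \<Rightarrow> bool" where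
  "well_contained_list b ys \<longleftrightarrow> (\<forall>i j. i < j \<and> j \<le> length ys \<longrightarrow>
     box_lo b ys \<le> box_lo b (drop i (take j ys)) \<and> box_hi b (drop i (take j ys)) \<le> box_hi b ys)"

lemma well_contained_listD:
  "well_contained_list b ys \<Longrightarrow> i < j \<Longrightarrow> j \<le> length ys \<Longrightarrow>
   box_lo b ys \<le> box_lo b (drop i (take j ys)) \<and> box_hi b (drop i (take j ys)) \<le> box_hi b ys"
  unfolding well_contained_list_def by blast

lemma well_contained_list_prefix:
  "well_contained_list b ys \<Longrightarrow> 0 < m \<Longrightarrow> m \<le> length ys \<Longrightarrow> box_lo b ys \<le> box_lo b (take m ys)"
  using well_contained_listD[of b ys 0 m] by simp

lemma well_contained_list_suffix:
  "well_contained_list b ys \<Longrightarrow> m < length ys \<Longrightarrow> box_hi b (drop m ys) \<le> box_hi b ys"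
  using well_contained_listD[of b ys m "length ys"] by simp

lemma well_contained_list_singleton: "well_contained_list b [x]"
  unfolding well_contained_list_def
proof (intro allI impI)
  fix i j :: nat assume "i < j \<and> j \<le> length [x]"
  then have "i = 0" "j = 1" by auto
  then show "box_lo b [x] \<le> box_lo b (drop i (take j [x])) \<and> box_hi b (drop i (take j [x])) \<le> box_hi b [x]"
    by simp
qed

lemma well_contained_list_mem_box:
  assumes "well_contained_list b ys" "x \<in> set ys" "b \<ge> 0"
  shows "box_lo b ys \<le> x" "x \<le> box_hi b ys"
proof -
  obtain p where p: "p < length ys" "ys ! p = x" using assms(2) by (metis in_set_conv_nth)
  then have "drop p (take (Suc p) ys) = [x]" by (simp add: take_Suc_conv_app_nth)
  then have "box_lo b ys \<le> x - b" "x + b \<le> box_hi b ys"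
    using well_contained_listD[OF assms(1), of p "Suc p"] p box_singleton by auto
  with assms(3) show "box_lo b ys \<le> x" "x \<le> box_hi b ys" by linarith+
qed

lemma box_hi_straddle_le:
  assumes sorted: "sorted (A1 @ A2 @ B1 @ B2)" and ne: "A2 \<noteq> []" "B1 \<noteq> []" and "b \<ge> 0"
    and suffix: "box_hi b A2 \<le> box_hi b (A1 @ A2)"
    and overlap: "box_lo b (B1 @ B2) \<le> box_hi b (A1 @ A2)"
  shows "box_hi b (A2 @ B1) \<le> box_hi b (A1 @ A2 @ B1 @ B2)"
proof -
  have "box_hi b (A2 @ B1) \<le> box_hi b ((A2 @ B1) @ B2)"
  proof (cases "B2 = []")
    case False
    have "mean (A2 @ B1) \<le> mean B2"
      using sorted ne False by (intro mean_le_of_sorted_append) (auto simp: sorted_append)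
    then show ?thesis using box_hi_left_le_append[of "A2 @ B1" B2] ne False \<open>b \<ge> 0\<close> by simp
  qed simp
  also have "\<dots> \<le> box_hi b (A1 @ A2 @ B1 @ B2)"
  proof (cases "A1 = []")
    case False
    have "box_lo b A2 \<le> box_hi b A1"
      using suffix box_hi_right_le_append_iff[OF False ne(1)] by simp
    then have "box_lo b (A2 @ B1 @ B2) \<le> box_hi b A1"
      using box_overlap_extend_right[OF False ne(1)] overlap ne(2) by simp
    then show ?thesis using box_hi_right_le_append_iff[OF False] ne by simp
  qed simp
  finally show ?thesis .
qed

lemma box_lo_straddle_le:
  assumes sorted: "sorted (A1 @ A2 @ B1 @ B2)" and ne: "A2 \<noteq> []" "B1 \<noteq> []" and "b \<ge> 0"
    and prefix: "box_lo b (B1 @ B2) \<le> box_lo b B1"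
    and overlap: "box_lo b (B1 @ B2) \<le> box_hi b (A1 @ A2)"
  shows "box_lo b (A1 @ A2 @ B1 @ B2) \<le> box_lo b (A2 @ B1)"
proof -
  have "box_lo b (A1 @ A2 @ B1 @ B2) \<le> box_lo b (A1 @ A2 @ B1)"
  proof (cases "B2 = []")
    case False
    have "box_lo b B2 \<le> box_hi b B1"
      using prefix box_lo_append_le_left_iff[OF ne(2) False] by simp
    then have "box_lo b B2 \<le> box_hi b (A1 @ A2 @ B1)"
      using box_overlap_extend_left[of "A1 @ A2" B1 B2] overlap ne False by simp
    then show ?thesis using box_lo_append_le_left_iff[of "A1 @ A2 @ B1" B2] ne False by simp
  qed simp
  also have "\<dots> \<le> box_lo b (A2 @ B1)"
  proof (cases "A1 = []")
    case False
    have "mean A1 \<le> mean (A2 @ B1)"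
      using sorted ne False by (intro mean_le_of_sorted_append) (auto simp: sorted_append)
    then show ?thesis using box_lo_append_le_right[of A1 "A2 @ B1"] ne False \<open>b \<ge> 0\<close> by simp
  qed simp
  finally show ?thesis .
qed

lemma straddling_block_within_box:
  assumes "b \<ge> 0" and sorted: "sorted (A @ B)"
    and wc: "well_contained_list b A" "well_contained_list b B"
    and overlap: "box_lo b B \<le> box_hi b A"
    and ij: "i < length A" "length A < j" "j \<le> length (A @ B)"
  shows "box_lo b (A @ B) \<le> box_lo b (drop i (take j (A @ B))) \<and>
    box_hi b (drop i (take j (A @ B))) \<le> box_hi b (A @ B)"
proof -
  define A1 A2 B1 B2 where "A1 = take i A" "A2 = drop i A"
    "B1 = take (j - length A) B" "B2 = drop (j - length A) B"
  have A: "A = A1 @ A2" and B: "B = B1 @ B2" unfolding A1_A2_B1_B2_def by simp_all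
  have ne: "A2 \<noteq> []" "B1 \<noteq> []" unfolding A1_A2_B1_B2_def using ij by auto
  have sorted': "sorted (A1 @ A2 @ B1 @ B2)" using sorted A B by simp
  have "box_hi b A2 \<le> box_hi b (A1 @ A2)"
    using well_contained_list_suffix[OF wc(1), of i] ij A unfolding A1_A2_B1_B2_def by simp
  then have "box_hi b (A2 @ B1) \<le> box_hi b (A @ B)"
    using box_hi_straddle_le[OF sorted' ne assms(1)] overlap A B by simp
  moreover have "box_lo b (B1 @ B2) \<le> box_lo b B1"
    using well_contained_list_prefix[OF wc(2), of "j - length A"] ij B
    unfolding A1_A2_B1_B2_def by (simp add: le_diff_conv)
  then have "box_lo b (A @ B) \<le> box_lo b (A2 @ B1)"
    using box_lo_straddle_le[OF sorted' ne assms(1)] overlap A B by simp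
  moreover have "drop i (take j (A @ B)) = A2 @ B1" unfolding A1_A2_B1_B2_def using ij by simp
  ultimately show ?thesis by simp
qed

lemma well_contained_list_append:
  assumes "b \<ge> 0" and sorted: "sorted (A @ B)" and ne: "A \<noteq> []" "B \<noteq> []"
    and wc: "well_contained_list b A" "well_contained_list b B"
    and overlap: "box_lo b B \<le> box_hi b A"
  shows "well_contained_list b (A @ B)"
  unfolding well_contained_list_def
proof (intro allI impI)
  fix i j assume ij: "i < j \<and> j \<le> length (A @ B)"
  have mean_le: "mean A \<le> mean B" using mean_le_of_sorted_append sorted ne by blast
  consider "j \<le> length A" | "length A \<le> i" | "i < length A" "length A < j" by linarith
  then show "box_lo b (A @ B) \<le> box_lo b (drop i (take j (A @ B))) \<and>
      box_hi b (drop i (take j (A @ B))) \<le> box_hi b (A @ B)"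
  proof cases
    case 1
    have "box_lo b (A @ B) \<le> box_lo b A" "box_hi b A \<le> box_hi b (A @ B)"
      using box_lo_append_le_left_iff[OF ne] overlap box_hi_left_le_append[OF ne mean_le] assms(1)
      by simp_all
    then show ?thesis using well_contained_listD[OF wc(1), of i j] ij 1 by force
  next
    case 2
    have "box_lo b (A @ B) \<le> box_lo b B" "box_hi b B \<le> box_hi b (A @ B)"
      using box_lo_append_le_right[OF ne mean_le] box_hi_right_le_append_iff[OF ne] overlap assms(1)
      by simp_all
    moreover have "drop i (take j (A @ B)) = drop (i - length A) (take (j - length A) B)"
      using 2 ij by simp
    ultimately show ?thesis
      using well_contained_listD[OF wc(2), of "i - length A" "j - length A"] ij 2 by force
  next
    case 3
    then show ?thesis using straddling_block_within_box[OF assms(1) sorted wc overlap] ij by blast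
  qed
qed

section \<open>Box partitions of sorted lists\<close>

definition box_partition :: "real \<Rightarrow> real list list \<Rightarrow> bool" where
  "box_partition b yss \<longleftrightarrow> (\<forall>Y\<in>set yss. Y \<noteq> [] \<and> well_contained_list b Y) \<and>
     sorted_wrt (\<lambda>P Q. box_hi b P < box_lo b Q) yss"

lemma box_partition_Cons:
  "box_partition b (P # R) \<longleftrightarrow>
     P \<noteq> [] \<and> well_contained_list b P \<and> (\<forall>Q\<in>set R. box_hi b P < box_lo b Q) \<and> box_partition b R"
  unfolding box_partition_def by auto

lemma box_partition_append:
  "box_partition b (R @ S) \<longleftrightarrow>
     box_partition b R \<and> box_partition b S \<and> (\<forall>P\<in>set R. \<forall>Q\<in>set S. box_hi b P < box_lo b Q)"
  unfolding box_partition_def by (auto simp: sorted_wrt_append)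

lemma box_partition_snoc:
  assumes "b \<ge> 0" "sorted (concat yss @ Q)" "box_partition b yss" "Q \<noteq> []" "well_contained_list b Q"
  shows "\<exists>zss. concat zss = concat yss @ Q \<and> box_partition b zss"
  using assms(2-5)
proof (induction yss arbitrary: Q rule: rev_induct)
  case Nil
  then show ?case by (intro exI[of _ "[Q]"]) (simp add: box_partition_def)
next
  case (snoc P yss)
  have yss: "box_partition b yss" and P: "P \<noteq> []" "well_contained_list b P"
    and below_P: "\<forall>Y\<in>set yss. box_hi b Y < box_lo b P"
    using snoc.prems(2) by (auto simp: box_partition_append box_partition_Cons)
  show ?case
  proof (cases "box_hi b P < box_lo b Q")
    case True
    then have "\<forall>Y\<in>set (yss @ [P]). box_hi b Y < box_lo b Q"
      using below_P box_lo_le_box_hi[OF assms(1), of P] by fastforce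
    moreover have "box_partition b [Q]" using snoc.prems by (simp add: box_partition_def)
    ultimately have "box_partition b ((yss @ [P]) @ [Q])"
      using snoc.prems(2) unfolding box_partition_append[of b "yss @ [P]" "[Q]"] by simp
    then show ?thesis by (intro exI[of _ "(yss @ [P]) @ [Q]"]) simp
  next
    case False
    have sorted: "sorted (concat yss @ (P @ Q))" using snoc.prems(1) by simp
    then have "well_contained_list b (P @ Q)"
      using well_contained_list_append[OF assms(1) _ P(1) snoc.prems(3) P(2) snoc.prems(4)] False
      by (simp add: sorted_append)
    then show ?thesis using snoc.IH[OF sorted yss] P by auto
  qed
qed

lemma box_partition_exists:
  assumes "b \<ge> 0" "sorted xs"
  shows "\<exists>yss. concat yss = xs \<and> box_partition b yss"
  using assms(2)
proof (induction xs rule: rev_induct)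
  case Nil
  then show ?case by (intro exI[of _ "[]"]) (simp add: box_partition_def)
next
  case (snoc x xs)
  then obtain yss where "concat yss = xs" "box_partition b yss" by (auto simp: sorted_append)
  then show ?case
    using box_partition_snoc[OF assms(1), of yss "[x]"] snoc.prems well_contained_list_singleton
    by auto
qed

lemma box_lo_hd_le_prefix:
  assumes "box_partition b yss" "0 < m" "m \<le> length (concat yss)"
  shows "box_lo b (hd yss) \<le> box_lo b (take m (concat yss))"
  using assms
proof (induction yss arbitrary: m)
  case (Cons P R)
  have P: "P \<noteq> []" "well_contained_list b P" and R: "box_partition b R"
    and above_P: "\<forall>Q\<in>set R. box_hi b P < box_lo b Q"
    using Cons.prems(1) by (auto simp: box_partition_Cons)
  show ?case
  proof (cases "m \<le> length P")
    case True
    then show ?thesis using well_contained_list_prefix[OF P(2)] Cons.prems by simp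
  next
    case False
    define B where "B = take (m - length P) (concat R)"
    have "length (concat (P # R)) = length P + length (concat R)" by simp
    then have "length (concat R) \<noteq> 0" using False Cons.prems(3) by linarith
    then have "concat R \<noteq> []" by (metis list.size(3))
    then have B: "B \<noteq> []" and "R \<noteq> []" using False unfolding B_def by auto
    then have "box_hi b P < box_lo b (hd R)" using above_P by simp
    also have "box_lo b (hd R) \<le> box_lo b B"
      using Cons.IH[OF R, of "m - length P"] False Cons.prems unfolding B_def by simp
    finally have "box_lo b P \<le> box_lo b (P @ B)"
      using box_lo_left_le_append_iff[OF P(1) B] by simp
    then show ?thesis using False unfolding B_def by simp
  qed
qed simp

lemma box_hi_suffix_le_last:
  assumes "box_partition b yss" "m < length (concat yss)"
  shows "box_hi b (drop m (concat yss)) \<le> box_hi b (last yss)"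
  using assms
proof (induction yss arbitrary: m)
  case (Cons P R)
  have P: "P \<noteq> []" "well_contained_list b P" and R: "box_partition b R"
    and above_P: "\<forall>Q\<in>set R. box_hi b P < box_lo b Q"
    using Cons.prems(1) by (auto simp: box_partition_Cons)
  show ?case
  proof (cases "R = []")
    case True
    then show ?thesis using well_contained_list_suffix[OF P(2)] Cons.prems by simp
  next
    case R_ne: False
    define C where "C = concat R"
    have C: "C \<noteq> []" using R_ne R unfolding C_def box_partition_def by (cases R) auto
    show ?thesis
    proof (cases "length P \<le> m")
      case True
      then show ?thesis using Cons.IH[OF R, of "m - length P"] Cons.prems R_ne by simp
    next
      case False
      define A where "A = drop m P"
      have A: "A \<noteq> []" using False unfolding A_def by simp
      have "box_hi b A \<le> box_hi b P"
        using well_contained_list_suffix[OF P(2)] False unfolding A_def by simp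
      also have "box_hi b P < box_lo b (hd R)" using above_P R_ne by simp
      also have "box_lo b (hd R) \<le> box_lo b C"
        using box_lo_hd_le_prefix[OF R, of "length C"] C unfolding C_def by simp
      finally have "box_hi b (A @ C) \<le> box_hi b C"
        using box_hi_append_le_right_iff[OF A C] by simp
      also have "box_hi b C \<le> box_hi b (last R)"
        using Cons.IH[OF R, of 0] C unfolding C_def by simp
      finally show ?thesis using False R_ne unfolding A_def C_def by simp
    qed
  qed
qed simp

lemma box_partition_hd_not_shorter:
  assumes "box_partition b (P # R)" "well_contained_list b Q"
    and "Q = take (length Q) (concat (P # R))" "length Q \<le> length (concat (P # R))"
  shows "length Q \<le> length P"
proof (rule ccontr)
  assume longer: "\<not> length Q \<le> length P"
  have P: "P \<noteq> []" and R: "box_partition b R" and above_P: "\<forall>Q\<in>set R. box_hi b P < box_lo b Q"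
    using assms(1) by (auto simp: box_partition_Cons)
  define B where "B = take (length Q - length P) (concat R)"
  have "take (length Q) (concat (P # R)) = P @ B"
    using longer unfolding B_def by (simp add: take_append)
  then have Q: "Q = P @ B" using assms(3) by simp
  have "length (concat (P # R)) = length P + length (concat R)" by simp
  then have "length (concat R) \<noteq> 0" using longer assms(4) by linarith
  then have "concat R \<noteq> []" by (metis list.size(3))
  then have B: "B \<noteq> []" "R \<noteq> []" using longer unfolding B_def by auto
  have "box_hi b P < box_lo b (hd R)" using above_P B by simp
  also have "box_lo b (hd R) \<le> box_lo b B"
    using box_lo_hd_le_prefix[OF R, of "length Q - length P"] longer assms(4) unfolding B_def by simp
  finally have "box_lo b P < box_lo b Q"
    using box_lo_left_less_append_iff[OF P B(1)] Q by simp
  moreover have "box_lo b Q \<le> box_lo b P"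
    using well_contained_list_prefix[OF assms(2), of "length P"] Q P by simp
  ultimately show False by simp
qed

lemma box_partition_unique:
  "concat yss = concat zss \<Longrightarrow> box_partition b yss \<Longrightarrow> box_partition b zss \<Longrightarrow> yss = zss"
proof (induction yss arbitrary: zss)
  case Nil
  then show ?case by (cases zss) (auto simp: box_partition_Cons)
next
  case (Cons P R1)
  obtain Q R2 where zss: "zss = Q # R2"
    using Cons.prems by (cases zss) (auto simp: box_partition_Cons)
  have wc: "well_contained_list b P" "well_contained_list b Q"
    using Cons.prems zss by (auto simp: box_partition_Cons)
  have eq: "P @ concat R1 = Q @ concat R2" using Cons.prems zss by simp
  have "length Q \<le> length P"
    using box_partition_hd_not_shorter[OF Cons.prems(2) wc(2)] eq
    by (metis append_eq_conv_conj concat.simps(2) length_append le_add1)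
  moreover have "length P \<le> length Q"
    using box_partition_hd_not_shorter[OF Cons.prems(3)[unfolded zss] wc(1)] eq
    by (metis append_eq_conv_conj concat.simps(2) length_append le_add1)
  ultimately have "P = Q" "concat R1 = concat R2" using eq by auto
  moreover have "R1 = R2" using Cons.IH[of R2] Cons.prems zss calculation by (simp add: box_partition_Cons)
  ultimately show ?case using zss by simp
qed

section \<open>The box decomposition of a multiset\<close>

lemma ctr_mset: "ctr (mset ys) = mean ys"
  unfolding ctr_def mean_def by (simp add: sum_mset_sum_list)

lemma box_mset: "box b (mset ys) = {box_lo b ys .. box_hi b ys}"
  unfolding box_def box_lo_def box_hi_def ctr_mset by simp

lemma well_contained_mset_iff:
  assumes "sorted ys" "b \<ge> 0"
  shows "well_contained b (mset ys) \<longleftrightarrow> well_contained_list b ys"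
proof -
  define inside where "inside i j \<longleftrightarrow>
    box_lo b ys \<le> box_lo b (drop i (take j ys)) \<and> box_hi b (drop i (take j ys)) \<le> box_hi b ys" for i j
  have "well_contained b (mset ys) \<longleftrightarrow> (\<forall>p q. p \<le> q \<and> q < length ys \<longrightarrow> inside p (Suc q))"
    using box_lo_le_box_hi[OF assms(2)] assms(1) unfolding inside_def
    by (simp add: well_contained_def sorted_sort_id box_mset drop_take)
  also have "\<dots> \<longleftrightarrow> (\<forall>i j. i < j \<and> j \<le> length ys \<longrightarrow> inside i j)"
  proof (intro iffI allI impI)
    fix i j assume "\<forall>p q. p \<le> q \<and> q < length ys \<longrightarrow> inside p (Suc q)" "i < j \<and> j \<le> length ys"
    moreover from this obtain q where "j = Suc q" by (cases j) auto
    ultimately show "inside i j" by simp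
  qed simp
  finally show ?thesis unfolding well_contained_list_def inside_def .
qed

lemma sorted_concat_box_partition:
  assumes "box_partition b yss" "b \<ge> 0" "\<forall>Y\<in>set yss. sorted Y"
  shows "sorted (concat yss)"
  using assms(1,3)
proof (induction yss)
  case (Cons P R)
  have "x \<le> y" if "Q \<in> set R" "x \<in> set P" "y \<in> set Q" for Q x y
  proof -
    have "well_contained_list b P" "well_contained_list b Q" "box_hi b P < box_lo b Q"
      using Cons.prems(1) that(1) by (auto simp: box_partition_Cons box_partition_def)
    then have "x \<le> box_hi b P" "box_hi b P < box_lo b Q" "box_lo b Q \<le> y"
      using that(2,3) well_contained_list_mem_box[OF _ _ assms(2)] by auto
    then show "x \<le> y" by linarith
  qed
  then show ?case using Cons by (auto simp: box_partition_Cons sorted_append)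
qed simp

lemma sorted_concat_part:
  assumes "sorted (concat yss)" "Y \<in> set yss"
  shows "sorted Y"
proof -
  obtain A B where "yss = A @ Y # B" using assms(2) by (meson split_list)
  then show ?thesis using assms(1) by (simp add: sorted_append)
qed

lemma is_box_decomp_of_box_partition:
  assumes "b \<ge> 0" "box_partition b yss" "concat yss = sorted_list_of_multiset z"
  shows "is_box_decomp b z (map mset yss)"
proof -
  have "sum_list (map mset yss) = mset (concat yss)" by (simp add: mset_concat)
  then have "sum_list (map mset yss) = z" using assms(3) by simp
  moreover have "\<forall>w\<in>set (map mset yss). w \<noteq> {#} \<and> well_contained b w"
    using assms(2,3) well_contained_mset_iff[OF sorted_concat_part assms(1), of yss]
    by (auto simp: box_partition_def)
  moreover have "u < v"
    if ij: "i < j" "j < length yss" and "u \<in> box b (mset (yss ! i))" "v \<in> box b (mset (yss ! j))"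
    for i j u v
  proof -
    have "u \<le> box_hi b (yss ! i)" "box_lo b (yss ! j) \<le> v" using that by (auto simp: box_mset)
    moreover have "box_hi b (yss ! i) < box_lo b (yss ! j)"
      using assms(2) ij unfolding box_partition_def sorted_wrt_iff_nth_less by auto
    ultimately show "u < v" by linarith
  qed
  ultimately show ?thesis unfolding is_box_decomp_def by auto
qed

lemma box_partition_of_is_box_decomp:
  assumes "b \<ge> 0" "is_box_decomp b z zs"
  shows "box_partition b (map sorted_list_of_multiset zs)"
    and "concat (map sorted_list_of_multiset zs) = sorted_list_of_multiset z"
proof -
  define yss where "yss = map sorted_list_of_multiset zs"
  have zs: "zs = map mset yss" unfolding yss_def by (simp add: map_idI)
  have "Y \<noteq> [] \<and> well_contained_list b Y" if Y: "Y \<in> set yss" for Y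
  proof -
    obtain w where w: "w \<in> set zs" "Y = sorted_list_of_multiset w" using Y unfolding yss_def by auto
    then have "w \<noteq> {#}" "well_contained b (mset Y)" using assms(2) unfolding is_box_decomp_def by auto
    moreover have "mset Y = w" using w(2) by simp
    ultimately have "Y \<noteq> []" by auto
    moreover have "well_contained_list b Y"
      using well_contained_mset_iff[OF _ assms(1), of Y] w \<open>well_contained b (mset Y)\<close> by simp
    ultimately show ?thesis by simp
  qed
  moreover have "box_hi b (yss ! i) < box_lo b (yss ! j)" if ij: "i < j" "j < length yss" for i j
  proof -
    have "\<forall>u\<in>box b (zs ! i). \<forall>v\<in>box b (zs ! j). u < v"
      using assms(2) ij unfolding is_box_decomp_def yss_def by auto
    moreover have "box_hi b (yss ! i) \<in> box b (zs ! i)" "box_lo b (yss ! j) \<in> box b (zs ! j)"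
      using ij box_lo_le_box_hi[OF assms(1)] unfolding zs by (simp_all add: box_mset)
    ultimately show ?thesis by blast
  qed
  ultimately show partition: "box_partition b (map sorted_list_of_multiset zs)"
    unfolding box_partition_def sorted_wrt_iff_nth_less yss_def by blast
  have "sorted (concat yss)"
    using sorted_concat_box_partition[OF partition assms(1)] unfolding yss_def by simp
  moreover have "mset (concat yss) = z"
    using assms(2) unfolding is_box_decomp_def zs by (simp add: mset_concat)
  then have "sorted_list_of_multiset z = sort (concat yss)" by auto
  ultimately show "concat (map sorted_list_of_multiset zs) = sorted_list_of_multiset z"
    unfolding yss_def by (simp add: sorted_sort_id)
qed

lemma box_decomp_eq:
  assumes "b \<ge> 0" "box_partition b yss" "concat yss = sorted_list_of_multiset z"
  shows "box_decomp b z = map mset yss"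
  unfolding box_decomp_def
proof (rule the_equality)
  show "is_box_decomp b z (map mset yss)" by (rule is_box_decomp_of_box_partition[OF assms])
next
  fix zs assume "is_box_decomp b z zs"
  from box_partition_of_is_box_decomp[OF assms(1) this]
  have "map sorted_list_of_multiset zs = yss"
    using box_partition_unique assms(2,3) by metis
  then show "zs = map mset yss" by (auto simp: map_idI)
qed

section \<open>Separation by a point\<close>

definition separates :: "real \<Rightarrow> real list \<Rightarrow> nat \<Rightarrow> real \<Rightarrow> bool" where
  "separates b xs k t \<longleftrightarrow> k \<le> length xs \<and>
     (\<forall>m<k. box_hi b (drop m (take k xs)) < t) \<and>
     (\<forall>L. 0 < L \<and> k + L \<le> length xs \<longrightarrow> t < box_lo b (take L (drop k xs)))"

lemma box_partition_below_of_last: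
  assumes "b \<ge> 0" "box_partition b Ls" "Ls \<noteq> []" "box_hi b (last Ls) < t"
  shows "\<forall>Y\<in>set Ls. box_hi b Y < t"
proof -
  obtain Ls' l where Ls: "Ls = Ls' @ [l]" using assms(3) by (cases Ls rule: rev_exhaust) auto
  then have "\<forall>Y\<in>set Ls'. box_hi b Y < box_lo b l"
    using assms(2) by (simp add: box_partition_append)
  then show ?thesis using Ls assms(4) box_lo_le_box_hi[OF assms(1), of l] by force
qed

lemma box_partition_above_of_hd:
  assumes "b \<ge> 0" "box_partition b Rs" "Rs \<noteq> []" "t < box_lo b (hd Rs)"
  shows "\<forall>Y\<in>set Rs. t < box_lo b Y"
proof -
  obtain r Rs' where Rs: "Rs = r # Rs'" using assms(3) by (cases Rs) auto
  then have "\<forall>Y\<in>set Rs'. box_hi b r < box_lo b Y"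
    using assms(2) by (simp add: box_partition_Cons)
  then show ?thesis using Rs assms(4) box_lo_le_box_hi[OF assms(1), of r] by force
qed

lemma separates_split:
  assumes "b \<ge> 0" and partition: "box_partition b (Ls @ Rs)"
    and below: "\<forall>Y\<in>set Ls. box_hi b Y < t" and above: "\<forall>Y\<in>set Rs. t < box_lo b Y"
  shows "t \<notin> (\<Union>Y\<in>set (Ls @ Rs). {box_lo b Y..box_hi b Y})"
    and "length (filter (\<lambda>x. x < t) (concat (Ls @ Rs))) = length (concat Ls)"
    and "separates b (concat (Ls @ Rs)) (length (concat Ls)) t"
proof -
  have Ls: "box_partition b Ls" and Rs: "box_partition b Rs"
    using partition by (simp_all add: box_partition_append)
  show "t \<notin> (\<Union>Y\<in>set (Ls @ Rs). {box_lo b Y..box_hi b Y})" using below above by force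
  have "\<forall>x\<in>set (concat Ls). x < t"
    using below well_contained_list_mem_box(2)[OF _ _ assms(1)] Ls
    by (fastforce simp: box_partition_def)
  moreover have "\<forall>x\<in>set (concat Rs). \<not> x < t"
    using above well_contained_list_mem_box(1)[OF _ _ assms(1)] Rs
    by (fastforce simp: box_partition_def)
  ultimately have "filter (\<lambda>x. x < t) (concat Ls) = concat Ls"
    and "filter (\<lambda>x. x < t) (concat Rs) = []"
    by (simp_all only: filter_id_conv filter_empty_conv)
  then have "filter (\<lambda>x. x < t) (concat (Ls @ Rs)) = concat Ls" by simp
  then show "length (filter (\<lambda>x. x < t) (concat (Ls @ Rs))) = length (concat Ls)" by simp
  show "separates b (concat (Ls @ Rs)) (length (concat Ls)) t"
    unfolding separates_def
  proof (intro conjI allI impI)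
    fix m assume m: "m < length (concat Ls)"
    then have "Ls \<noteq> []" by auto
    then have "box_hi b (drop m (concat Ls)) < t"
      using box_hi_suffix_le_last[OF Ls m] below last_in_set by fastforce
    then show "box_hi b (drop m (take (length (concat Ls)) (concat (Ls @ Rs)))) < t" by simp
  next
    fix L assume L: "0 < L \<and> length (concat Ls) + L \<le> length (concat (Ls @ Rs))"
    then have L_le: "L \<le> length (concat Rs)" by simp
    with L have "Rs \<noteq> []" by auto
    then have "t < box_lo b (hd Rs)" using above by simp
    also have "box_lo b (hd Rs) \<le> box_lo b (take L (concat Rs))"
      using box_lo_hd_le_prefix[OF Rs, of L] L L_le by simp
    finally have "t < box_lo b (take L (concat Rs))" .
    then show "t < box_lo b (take L (drop (length (concat Ls)) (concat (Ls @ Rs))))" by simp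
  qed simp
qed

lemma split_concat_at:
  "k \<le> length (concat yss) \<Longrightarrow>
   (\<exists>Ls Rs. yss = Ls @ Rs \<and> length (concat Ls) = k) \<or>
   (\<exists>Ls Y Rs. yss = Ls @ Y # Rs \<and> length (concat Ls) < k \<and> k < length (concat Ls) + length Y)"
proof (induction yss arbitrary: k)
  case Nil
  then show ?case by simp
next
  case (Cons Y R)
  consider "k = 0" | "0 < k" "k < length Y" | "length Y \<le> k" by linarith
  then show ?case
  proof cases
    case 1
    then show ?thesis by (intro disjI1 exI[of _ "[]"] exI[of _ "Y # R"]) simp
  next
    case 2
    then show ?thesis by (intro disjI2 exI[of _ "[]"] exI[of _ Y] exI[of _ R]) simp
  next
    case 3
    then have "k - length Y \<le> length (concat R)" using Cons.prems by simp
    from Cons.IH[OF this] show ?thesis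
    proof (elim disjE exE conjE)
      fix Ls Rs assume "R = Ls @ Rs" "length (concat Ls) = k - length Y"
      then show ?thesis using 3 by (intro disjI1 exI[of _ "Y # Ls"] exI[of _ Rs]) auto
    next
      fix Ls Z Rs assume "R = Ls @ Z # Rs" "length (concat Ls) < k - length Y"
        "k - length Y < length (concat Ls) + length Z"
      then show ?thesis using 3 by (intro disjI2 exI[of _ "Y # Ls"] exI[of _ Z] exI[of _ Rs]) auto
    qed
  qed
qed

lemma separates_at_block_boundary:
  assumes partition: "box_partition b yss" and xs: "concat yss = xs" and sep: "separates b xs k t"
  shows "\<exists>Ls Rs. yss = Ls @ Rs \<and> length (concat Ls) = k"
proof (rule ccontr)
  assume "\<not> ?thesis"
  moreover have "k \<le> length (concat yss)" using sep xs unfolding separates_def by simp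
  ultimately obtain Ls Y Rs where yss: "yss = Ls @ Y # Rs"
    and straddle: "length (concat Ls) < k" "k < length (concat Ls) + length Y"
    using split_concat_at by blast
  define d where "d = k - length (concat Ls)"
  define A B where "A = take d Y" "B = drop d Y"
  have d: "0 < d" "d < length Y" using straddle unfolding d_def by auto
  then have ne: "A \<noteq> []" "B \<noteq> []" unfolding A_B_def by auto
  have xs_split: "xs = concat Ls @ Y @ concat Rs" using yss xs by simp
  have "A = drop (length (concat Ls)) (take k xs)"
    unfolding xs_split A_B_def d_def using straddle by simp
  then have "box_hi b A < t" using sep straddle unfolding separates_def by auto
  moreover have "0 < length B" "k + length B \<le> length xs"
    using ne(2) straddle unfolding xs_split A_B_def d_def by auto
  then have "t < box_lo b (take (length B) (drop k xs))"
    using sep unfolding separates_def by blast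
  moreover have "take (length B) (drop k xs) = B"
    unfolding xs_split A_B_def d_def using straddle by simp
  ultimately have "box_hi b A < t" "t < box_lo b B" by simp_all
  then have "box_lo b A < box_lo b Y"
    using box_lo_left_less_append_iff[OF ne] unfolding A_B_def by simp
  moreover have "well_contained_list b Y" using partition yss by (simp add: box_partition_def)
  then have "box_lo b Y \<le> box_lo b A"
    using well_contained_list_prefix d unfolding A_B_def by simp
  ultimately show False by simp
qed

lemma separates_of_outside_boxes:
  assumes "b \<ge> 0" and partition: "box_partition b yss" and xs: "concat yss = xs"
    and outside: "t \<notin> (\<Union>Y\<in>set yss. {box_lo b Y..box_hi b Y})"
  shows "separates b xs (length (filter (\<lambda>x. x < t) xs)) t"
proof -
  define Ls Rs where "Ls = takeWhile (\<lambda>Y. box_hi b Y < t) yss" "Rs = dropWhile (\<lambda>Y. box_hi b Y < t) yss"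
  have yss: "yss = Ls @ Rs" unfolding Ls_Rs_def by simp
  have below: "\<forall>Y\<in>set Ls. box_hi b Y < t" unfolding Ls_Rs_def by (auto dest: set_takeWhileD)
  have above: "\<forall>Y\<in>set Rs. t < box_lo b Y"
  proof (cases "Rs = []")
    case False
    then have "\<not> box_hi b (hd Rs) < t"
      using hd_dropWhile[of "\<lambda>Y. box_hi b Y < t" yss] unfolding Ls_Rs_def by simp
    moreover have "hd Rs \<in> set yss" using hd_in_set[OF False] yss by simp
    ultimately have "t < box_lo b (hd Rs)" using outside by force
    then show ?thesis
      using box_partition_above_of_hd[OF assms(1) _ False] partition yss
      by (simp add: box_partition_append)
  qed simp
  note split = separates_split[OF assms(1) partition[unfolded yss] below above]
  have "length (filter (\<lambda>x. x < t) xs) = length (concat Ls)"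
    using split(2) unfolding xs[symmetric] yss .
  then show ?thesis using split(3) unfolding xs[symmetric] yss by simp
qed

lemma outside_boxes_of_separates:
  assumes "b \<ge> 0" and partition: "box_partition b yss" and xs: "concat yss = xs"
    and sep: "separates b xs k t"
  shows "t \<notin> (\<Union>Y\<in>set yss. {box_lo b Y..box_hi b Y})" "length (filter (\<lambda>x. x < t) xs) = k"
proof -
  obtain Ls Rs where yss: "yss = Ls @ Rs" and k: "length (concat Ls) = k"
    using separates_at_block_boundary[OF partition xs sep] by blast
  have Ls: "box_partition b Ls" and Rs: "box_partition b Rs"
    using partition yss by (simp_all add: box_partition_append)
  have below: "\<forall>Y\<in>set Ls. box_hi b Y < t"
  proof (cases "Ls = []")
    case False
    have "last Ls = drop (k - length (last Ls)) (take k xs)"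
      using False yss xs k by (cases Ls rule: rev_exhaust) auto
    moreover have "k - length (last Ls) < k"
      using False Ls k by (cases Ls rule: rev_exhaust) (auto simp: box_partition_def)
    ultimately have "box_hi b (last Ls) < t" using sep unfolding separates_def by metis
    then show ?thesis using box_partition_below_of_last[OF assms(1) Ls False] by simp
  qed simp
  have above: "\<forall>Y\<in>set Rs. t < box_lo b Y"
  proof (cases "Rs = []")
    case False
    have "hd Rs = take (length (hd Rs)) (drop k xs)"
      using False yss xs k by (cases Rs) auto
    moreover have "0 < length (hd Rs)" "k + length (hd Rs) \<le> length xs"
      using False Rs yss xs k by (cases Rs; auto simp: box_partition_def)+
    ultimately have "t < box_lo b (hd Rs)" using sep unfolding separates_def by metis
    then show ?thesis using box_partition_above_of_hd[OF assms(1) Rs False] by simp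
  qed simp
  note split = separates_split[OF assms(1) partition[unfolded yss] below above]
  show "t \<notin> (\<Union>Y\<in>set yss. {box_lo b Y..box_hi b Y})" using split(1) unfolding yss .
  show "length (filter (\<lambda>x. x < t) xs) = k" using split(2) unfolding xs[symmetric] yss k .
qed

lemma U_set_eq_separates:
  assumes "b > 0"
  shows "U_set b a n i = {z. size z = n \<and> separates b (sorted_list_of_multiset z) i (a i)}"
proof -
  have "z \<in> U_set b a n i \<longleftrightarrow> size z = n \<and> separates b (sorted_list_of_multiset z) i (a i)" for z
  proof -
    obtain yss where yss: "concat yss = sorted_list_of_multiset z" "box_partition b yss"
      using box_partition_exists[of b "sorted_list_of_multiset z"] assms by auto
    have boxes: "(\<Union>w\<in>set (box_decomp b z). box b w) = (\<Union>Y\<in>set yss. {box_lo b Y..box_hi b Y})"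
      using box_decomp_eq[of b yss z] assms yss by (simp add: box_mset)
    have count: "size (filter_mset (\<lambda>x. x < a i) z) =
        length (filter (\<lambda>x. x < a i) (sorted_list_of_multiset z))"
      by (metis mset_filter mset_sorted_list_of_multiset size_mset)
    show ?thesis
      unfolding U_set_def mem_Collect_eq boxes count
      using separates_of_outside_boxes[OF _ yss(2,1), where t = "a i"]
        outside_boxes_of_separates[OF _ yss(2,1), where t = "a i"] assms
      by auto
  qed
  then show ?thesis by blast
qed

section \<open>The terms of the function rho\<close>

definition rho_terms :: "real \<Rightarrow> (nat \<Rightarrow> real) \<Rightarrow> nat \<Rightarrow> nat \<Rightarrow> real list \<Rightarrow> real list" where
  "rho_terms b a n k xs =
     [avg xs (k - i) k + real (i + 1) * b - a k. i \<leftarrow> [0..<k]] @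
     [a k - avg xs (k + 1) (k + 1 + i) + real (i + 1) * b. i \<leftarrow> [0..<n - k]]"

lemma rho_eq_reg_max_rho_terms:
  "rho \<theta> \<delta> b a n k z = reg_max \<theta> \<delta> (rho_terms b a n k (sorted_list_of_multiset z))"
  unfolding rho_def rho_terms_def Let_def by simp

lemma length_rho_terms: "k \<le> n \<Longrightarrow> length (rho_terms b a n k xs) = n"
  unfolding rho_terms_def by simp

lemma sum_nth_interval_eq_sum_list:
  "1 \<le> p \<Longrightarrow> q \<le> length xs \<Longrightarrow> (\<Sum>j=p..q. xs ! (j - 1)) = sum_list (drop (p - 1) (take q xs))"
proof (induction q)
  case (Suc q)
  show ?case
  proof (cases "Suc q < p")
    case False
    then have "drop (p - 1) (take (Suc q) xs) = drop (p - 1) (take q xs) @ [xs ! q]"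
      using Suc.prems by (simp add: take_Suc_conv_app_nth)
    moreover have "(\<Sum>j=p..Suc q. xs ! (j - 1)) = (\<Sum>j=p..q. xs ! (j - 1)) + xs ! q"
      using False by (simp add: sum.cl_ivl_Suc)
    ultimately show ?thesis using Suc by simp
  qed simp
qed simp

lemma avg_eq_mean:
  "1 \<le> p \<Longrightarrow> p \<le> q \<Longrightarrow> q \<le> length xs \<Longrightarrow> avg xs p q = mean (drop (p - 1) (take q xs))"
  unfolding avg_def mean_def using sum_nth_interval_eq_sum_list[of p q xs] by simp

lemma rho_terms_nth_left:
  assumes "length xs = n" "k \<le> n" "j < k"
  shows "rho_terms b a n k xs ! j = box_hi b (drop (k - Suc j) (take k xs)) - a k"
proof -
  have "avg xs (k - j) k = mean (drop (k - Suc j) (take k xs))"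
    using avg_eq_mean[of "k - j" k xs] assms by (simp add: Suc_diff_Suc)
  then show ?thesis
    unfolding rho_terms_def box_hi_def using assms by (simp add: nth_append)
qed

lemma rho_terms_nth_right:
  assumes "length xs = n" "k \<le> j" "j < n"
  shows "rho_terms b a n k xs ! j = a k - box_lo b (take (j - k + 1) (drop k xs))"
proof -
  have "avg xs (k + 1) (k + 1 + (j - k)) = mean (take (j - k + 1) (drop k xs))"
    using avg_eq_mean[of "k + 1" "k + 1 + (j - k)" xs] assms by (simp add: drop_take Suc_diff_le)
  then show ?thesis
    unfolding rho_terms_def box_lo_def using assms by (simp add: nth_append)
qed

lemma separates_iff_rho_terms_neg:
  assumes len: "length xs = n" and "k \<le> n"
  shows "separates b xs k (a k) \<longleftrightarrow> (\<forall>j<n. rho_terms b a n k xs ! j < 0)"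
proof -
  let ?T = "rho_terms b a n k xs"
  have left: "(\<forall>j<k. ?T ! j < 0) \<longleftrightarrow> (\<forall>m<k. box_hi b (drop m (take k xs)) < a k)"
  proof (intro iffI allI impI)
    fix m assume "\<forall>j<k. ?T ! j < 0" and m: "m < k"
    then have "?T ! (k - Suc m) < 0" by simp
    then show "box_hi b (drop m (take k xs)) < a k"
      using rho_terms_nth_left[OF assms, of "k - Suc m" b a] m by simp
  next
    fix j assume "\<forall>m<k. box_hi b (drop m (take k xs)) < a k" "j < k"
    then show "?T ! j < 0" using rho_terms_nth_left[OF assms, of j b a] by simp
  qed
  have right: "(\<forall>j. k \<le> j \<and> j < n \<longrightarrow> ?T ! j < 0) \<longleftrightarrow>
      (\<forall>L. 0 < L \<and> k + L \<le> n \<longrightarrow> a k < box_lo b (take L (drop k xs)))"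
  proof (intro iffI allI impI)
    fix L assume "\<forall>j. k \<le> j \<and> j < n \<longrightarrow> ?T ! j < 0" and L: "0 < L \<and> k + L \<le> n"
    moreover have idx: "k \<le> k + L - 1" "k + L - 1 < n" using L by linarith+
    ultimately have "?T ! (k + L - 1) < 0" by blast
    moreover have "k + L - 1 - k + 1 = L" using L by simp
    ultimately show "a k < box_lo b (take L (drop k xs))"
      using rho_terms_nth_right[OF len idx, of b a] by simp
  next
    fix j assume "\<forall>L. 0 < L \<and> k + L \<le> n \<longrightarrow> a k < box_lo b (take L (drop k xs))" "k \<le> j \<and> j < n"
    then show "?T ! j < 0" using rho_terms_nth_right[OF len, of k j b a] by simp
  qed
  have "(\<forall>j<n. ?T ! j < 0) \<longleftrightarrow> (\<forall>j<k. ?T ! j < 0) \<and> (\<forall>j. k \<le> j \<and> j < n \<longrightarrow> ?T ! j < 0)"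
    using assms(2) by (meson le_less_trans not_le)
  then show ?thesis unfolding left right separates_def using assms by simp
qed

lemma avg_diff_le:
  assumes "length xs = length ys" "\<forall>i<length xs. \<bar>xs ! i - ys ! i\<bar> \<le> e"
    and "1 \<le> p" "p \<le> q" "q \<le> length xs"
  shows "\<bar>avg xs p q - avg ys p q\<bar> \<le> e"
proof -
  have "\<bar>(\<Sum>j=p..q. xs ! (j - 1)) - (\<Sum>j=p..q. ys ! (j - 1))\<bar> \<le> (\<Sum>j=p..q. \<bar>xs ! (j - 1) - ys ! (j - 1)\<bar>)"
    unfolding sum_subtractf[symmetric] by (rule sum_abs)
  also have "\<dots> \<le> (\<Sum>j=p..q. e)" using assms by (intro sum_mono) auto
  also have "\<dots> = real (q - p + 1) * e" using assms by simp
  finally show ?thesis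
    unfolding avg_def diff_divide_distrib[symmetric] by (simp add: divide_le_eq mult.commute)
qed

lemma rho_terms_nth_le:
  assumes "length xs = n" "length ys = n" "k \<le> n" "\<forall>i<n. \<bar>xs ! i - ys ! i\<bar> \<le> e" "j < n"
  shows "rho_terms b a n k xs ! j \<le> rho_terms b a n k ys ! j + e"
proof (cases "j < k")
  case True
  then have "\<bar>avg xs (k - j) k - avg ys (k - j) k\<bar> \<le> e"
    using avg_diff_le[of xs ys e "k - j" k] assms by simp
  then show ?thesis unfolding rho_terms_def using True assms by (simp add: nth_append)
next
  case False
  then have "\<bar>avg xs (k + 1) (k + 1 + (j - k)) - avg ys (k + 1) (k + 1 + (j - k))\<bar> \<le> e"
    using avg_diff_le[of xs ys e "k + 1" "k + 1 + (j - k)"] assms by simp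
  then show ?thesis unfolding rho_terms_def using False assms by (simp add: nth_append)
qed

lemma rho_terms_le_of_margins:
  assumes len: "length xs = n" and k: "k \<le> n"
    and left: "\<forall>m<k. box_hi b (drop m (take k xs)) \<le> a k - \<epsilon>"
    and right: "\<forall>L. 0 < L \<and> k + L \<le> n \<longrightarrow> a k + \<epsilon> \<le> box_lo b (take L (drop k xs))"
    and "j < n"
  shows "rho_terms b a n k xs ! j \<le> - \<epsilon>"
proof (cases "j < k")
  case True
  then have "box_hi b (drop (k - Suc j) (take k xs)) \<le> a k - \<epsilon>" using left by simp
  then show ?thesis using rho_terms_nth_left[OF len k True, of b a] by simp
next
  case False
  then have "a k + \<epsilon> \<le> box_lo b (take (j - k + 1) (drop k xs))" using right \<open>j < n\<close> by simp
  then show ?thesis using rho_terms_nth_right[OF len _ \<open>j < n\<close>, of k b a] False by simp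
qed

section \<open>Existence of a separating cut\<close>

lemma spacing_lower_bound:
  assumes "\<forall>i<n. g \<le> a (Suc i) - a i"
  shows "k + d \<le> n \<Longrightarrow> g * real d \<le> a (k + d) - a k"
proof (induction d)
  case (Suc d)
  then have "g \<le> a (Suc (k + d)) - a (k + d)" using assms by simp
  then show ?case using Suc by (simp add: algebra_simps)
qed simp

lemma sum_before_le:
  assumes gap: "\<forall>i<n. 2 * c \<le> a (Suc i) - a i" and "k \<le> n"
  shows "L \<le> k \<Longrightarrow> (\<Sum>j=k-L..<k. a j + c) \<le> real L * a k - real L ^ 2 * c"
proof (induction L)
  case (Suc L)
  have "2 * c * real (Suc L) \<le> a k - a (k - Suc L)"
    using spacing_lower_bound[OF gap, of "k - Suc L" "Suc L"] Suc.prems assms(2) by simp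
  moreover have "{k - Suc L..<k} = insert (k - Suc L) {k - L..<k}" using Suc.prems by auto
  then have "(\<Sum>j=k - Suc L..<k. a j + c) = a (k - Suc L) + c + (\<Sum>j=k-L..<k. a j + c)"
    using Suc.prems by simp
  ultimately show ?case using Suc by (simp add: algebra_simps power2_eq_square)
qed simp

lemma sum_after_ge:
  assumes gap: "\<forall>i<n. 2 * c \<le> a (Suc i) - a i"
  shows "k + L \<le> n \<Longrightarrow> real L * a k + real L ^ 2 * c \<le> (\<Sum>j=k..<k+L. a j + c)"
proof (induction L)
  case (Suc L)
  have "2 * c * real L \<le> a (k + L) - a k"
    using spacing_lower_bound[OF gap, of k L] Suc.prems by simp
  then show ?case using Suc by (simp add: algebra_simps power2_eq_square)
qed simp

definition cut_potential :: "real \<Rightarrow> (nat \<Rightarrow> real) \<Rightarrow> real list \<Rightarrow> nat \<Rightarrow> real" where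
  "cut_potential c a xs i = sum_list (take i xs) - (\<Sum>j=0..<i. a j + c)"

lemma mean_before_cut_le:
  assumes gap: "\<forall>i<n. 2 * c \<le> a (Suc i) - a i" and "k \<le> n" "m < k" "k \<le> length xs"
    and min: "cut_potential c a xs k \<le> cut_potential c a xs m"
  shows "mean (drop m (take k xs)) \<le> a k - real (k - m) * c"
proof -
  define L where "L = k - m"
  have L: "0 < L" "m = k - L" "length (drop m (take k xs)) = L"
    using assms unfolding L_def by auto
  have "sum_list (drop m (take k xs)) = sum_list (take k xs) - sum_list (take m xs)"
    using \<open>m < k\<close> by (metis add_diff_cancel_left' append_take_drop_id min.absorb1
        less_imp_le_nat sum_list_append take_take)
  also have "\<dots> \<le> (\<Sum>j=m..<k. a j + c)"
    using min \<open>m < k\<close> sum_diff_nat_ivl[of 0 m k "\<lambda>j. a j + c"]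
    unfolding cut_potential_def by simp
  also have "\<dots> \<le> real L * a k - real L ^ 2 * c"
    using sum_before_le[OF gap \<open>k \<le> n\<close>, of L] L by simp
  finally have "sum_list (drop m (take k xs)) \<le> real L * (a k - real L * c)"
    by (simp add: power2_eq_square algebra_simps)
  then show ?thesis
    using L(1) unfolding mean_def L(3) L_def[symmetric] by (simp add: pos_divide_le_eq mult.commute)
qed

lemma mean_after_cut_ge:
  assumes gap: "\<forall>i<n. 2 * c \<le> a (Suc i) - a i" and "0 < L" "k + L \<le> n" "n \<le> length xs"
    and min: "cut_potential c a xs k \<le> cut_potential c a xs (k + L)"
  shows "a k + real L * c \<le> mean (take L (drop k xs))"
proof -
  have len: "length (take L (drop k xs)) = L" using assms by simp
  have "real L * a k + real L ^ 2 * c \<le> (\<Sum>j=k..<k+L. a j + c)"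
    using sum_after_ge[OF gap \<open>k + L \<le> n\<close>] .
  also have "\<dots> \<le> sum_list (take (k + L) xs) - sum_list (take k xs)"
    using min sum_diff_nat_ivl[of 0 k "k + L" "\<lambda>j. a j + c"] unfolding cut_potential_def by simp
  also have "\<dots> = sum_list (take L (drop k xs))" by (simp add: take_add)
  finally have "real L * (a k + real L * c) \<le> sum_list (take L (drop k xs))"
    by (simp add: power2_eq_square algebra_simps)
  then show ?thesis
    using \<open>0 < L\<close> unfolding mean_def len by (simp add: pos_le_divide_eq mult.commute)
qed

lemma exists_separating_index:
  assumes len: "length xs = n" and "\<epsilon> > 0" and gap: "\<forall>i<n. 2 * b + 2 * \<epsilon> \<le> a (Suc i) - a i"
  shows "\<exists>k\<le>n. (\<forall>m<k. box_hi b (drop m (take k xs)) \<le> a k - \<epsilon>) \<and>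
               (\<forall>L. 0 < L \<and> k + L \<le> n \<longrightarrow> a k + \<epsilon> \<le> box_lo b (take L (drop k xs)))"
proof -
  have gap': "\<forall>i<n. 2 * (b + \<epsilon>) \<le> a (Suc i) - a i" using gap by simp
  let ?F = "cut_potential (b + \<epsilon>) a xs"
  obtain k where k: "k \<le> n" "?F k = Min (?F ` {..n})"
    using Min_in[of "?F ` {..n}"] by fastforce
  then have k_min: "?F k \<le> ?F m" if "m \<le> n" for m using that by simp
  have "box_hi b (drop m (take k xs)) \<le> a k - \<epsilon>" if m: "m < k" for m
  proof -
    have "mean (drop m (take k xs)) \<le> a k - real (k - m) * (b + \<epsilon>)"
      using mean_before_cut_le[OF gap' k(1) m] k_min[of m] k(1) m len by simp
    moreover have "\<epsilon> \<le> real (k - m) * \<epsilon>" using m \<open>\<epsilon> > 0\<close> by simp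
    ultimately show ?thesis using m k(1) len unfolding box_hi_def by (simp add: algebra_simps)
  qed
  moreover have "a k + \<epsilon> \<le> box_lo b (take L (drop k xs))" if L: "0 < L" "k + L \<le> n" for L
  proof -
    have "a k + real L * (b + \<epsilon>) \<le> mean (take L (drop k xs))"
      using mean_after_cut_ge[OF gap' L] k_min[of "k + L"] L len by simp
    moreover have "\<epsilon> \<le> real L * \<epsilon>" using L \<open>\<epsilon> > 0\<close> by simp
    ultimately show ?thesis using L len unfolding box_lo_def by (simp add: algebra_simps)
  qed
  ultimately show ?thesis using k(1) by blast
qed

section \<open>Sublevel sets of nonexpansive functions of the sorted points\<close>

definition num_le :: "real \<Rightarrow> real list \<Rightarrow> nat" where
  "num_le t xs = card {i. i < length xs \<and> xs ! i \<le> t}"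

lemma num_le_sort: "num_le t (sort xs) = num_le t xs"
proof -
  have "length (filter (\<lambda>v. v \<le> t) (sort xs)) = length (filter (\<lambda>v. v \<le> t) xs)"
    by (metis mset_filter mset_sort size_mset)
  then show ?thesis unfolding num_le_def length_filter_conv_card by simp
qed

lemma less_num_le_of_sorted:
  assumes "sorted s" "j < length s" "s ! j \<le> t"
  shows "j < num_le t s"
proof -
  have "{0..j} \<subseteq> {i. i < length s \<and> s ! i \<le> t}"
    using assms by (auto intro: order_trans[OF sorted_nth_mono[OF assms(1)]])
  then have "card {0..j} \<le> num_le t s" unfolding num_le_def by (intro card_mono) auto
  then show ?thesis by simp
qed

lemma num_le_le_of_sorted:
  assumes "sorted s" "j < length s" "t < s ! j"
  shows "num_le t s \<le> j"
proof -
  have "{i. i < length s \<and> s ! i \<le> t} \<subseteq> {..<j}"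
    using assms sorted_nth_mono[OF assms(1), of j] by (fastforce simp: not_less[symmetric])
  then have "num_le t s \<le> card {..<j}" unfolding num_le_def by (intro card_mono) auto
  then show ?thesis by simp
qed

lemma num_le_mono:
  "length xs = length ys \<Longrightarrow> \<forall>i<length xs. ys ! i \<le> xs ! i + e \<Longrightarrow> num_le t xs \<le> num_le (t + e) ys"
  unfolding num_le_def by (intro card_mono) fastforce+

lemma sort_nth_le:
  fixes xs ys :: "real list"
  assumes "length xs = length ys" "\<forall>i<length xs. ys ! i \<le> xs ! i + e" "j < length xs"
  shows "sort ys ! j \<le> sort xs ! j + e"
proof (rule ccontr)
  assume gt: "\<not> ?thesis"
  have "j < num_le (sort xs ! j) (sort xs)" using less_num_le_of_sorted assms(3) by simp
  also have "\<dots> = num_le (sort xs ! j) xs" by (rule num_le_sort)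
  also have "\<dots> \<le> num_le (sort xs ! j + e) ys" by (rule num_le_mono[OF assms(1,2)])
  also have "\<dots> = num_le (sort xs ! j + e) (sort ys)" by (rule num_le_sort[symmetric])
  also have "\<dots> \<le> j" using num_le_le_of_sorted gt assms by simp
  finally show False by simp
qed

definition sup_nonexpansive :: "nat \<Rightarrow> (real list \<Rightarrow> real) \<Rightarrow> bool" where
  "sup_nonexpansive n F \<longleftrightarrow> (\<forall>xs ys e. length xs = n \<and> length ys = n \<and>
     (\<forall>i<n. \<bar>xs ! i - ys ! i\<bar> \<le> e) \<longrightarrow> F xs \<le> F ys + e)"

lemma open_sorted_sublevel:
  assumes "sup_nonexpansive n F"
  shows "open {x :: nat \<Rightarrow> real. F (sort (map x [0..<n])) < 0}" (is "open ?V")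
  unfolding open_subopen[of ?V]
proof
  fix x assume "x \<in> ?V"
  define r where "r = - F (sort (map x [0..<n])) / 2"
  have r: "r > 0" using \<open>x \<in> ?V\<close> unfolding r_def by simp
  define T where "T = (\<Inter>i\<in>{..<n}. {y :: nat \<Rightarrow> real. \<bar>y i - x i\<bar> < r})"
  have "open T" unfolding T_def
    by (intro open_INT finite_lessThan ballI open_Collect_less continuous_intros) auto
  moreover have "x \<in> T" unfolding T_def using r by simp
  moreover have "T \<subseteq> ?V"
  proof
    fix y assume "y \<in> T"
    then have "\<forall>i<n. \<bar>y i - x i\<bar> < r" unfolding T_def by simp
    then have "\<forall>i<n. y i \<le> x i + r" "\<forall>i<n. x i \<le> y i + r" by (force simp: abs_less_iff)+
    then have "\<forall>j<n. \<bar>sort (map y [0..<n]) ! j - sort (map x [0..<n]) ! j\<bar> \<le> r"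
      using sort_nth_le[of "map x [0..<n]" "map y [0..<n]" r]
        sort_nth_le[of "map y [0..<n]" "map x [0..<n]" r] by (simp add: abs_le_iff add.commute diff_le_eq)
    then have "F (sort (map y [0..<n])) \<le> F (sort (map x [0..<n])) + r"
      using assms unfolding sup_nonexpansive_def by simp
    then show "y \<in> ?V" unfolding r_def using \<open>x \<in> ?V\<close> by simp
  qed
  ultimately show "\<exists>T. open T \<and> x \<in> T \<and> T \<subseteq> ?V" by blast
qed

lemma sym_open_sublevels:
  assumes "finite J" "\<forall>j\<in>J. sup_nonexpansive n (F j)"
  shows "sym_open n {z. size z = n \<and> (\<forall>j\<in>J. F j (sorted_list_of_multiset z) < 0)}"
proof -
  let ?S = "{x :: nat \<Rightarrow> real. \<forall>i\<ge>n. x i = 0}"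
  let ?V = "\<Inter>j\<in>J. {x :: nat \<Rightarrow> real. F j (sort (map x [0..<n])) < 0}"
  have "open ?V" using assms open_sorted_sublevel by (intro open_INT) auto
  then have "openin (top_of_set ?S) (?S \<inter> ?V)" by (rule openin_open_Int)
  moreover have "{x. (\<forall>i\<ge>n. x i = 0) \<and>
      mset (map x [0..<n]) \<in> {z. size z = n \<and> (\<forall>j\<in>J. F j (sorted_list_of_multiset z) < 0)}} = ?S \<inter> ?V"
    by (auto simp del: mset_map mset_upt)
  ultimately show ?thesis unfolding sym_open_def by auto
qed

section \<open>The regularized maximum\<close>

lemma smooth_bump_continuous: "smooth_bump \<theta> \<Longrightarrow> continuous_on UNIV \<theta>"
  unfolding smooth_bump_def
  by (metis funpow_0 continuous_at_imp_continuous_on differentiable_imp_continuous_within)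

lemma scaled_bump_integral:
  assumes "smooth_bump \<theta>" "\<delta> > 0"
  shows "integrable lborel (\<lambda>x. \<theta> (x / \<delta>) / \<delta>)" "(\<integral>x. \<theta> (x / \<delta>) / \<delta> \<partial>lborel) = 1"
proof -
  have [measurable]: "\<theta> \<in> borel_measurable borel"
    by (rule borel_measurable_continuous_onI[OF smooth_bump_continuous[OF assms(1)]])
  have nonneg: "\<And>x. 0 \<le> \<theta> x" and "(\<theta> has_integral 1) UNIV"
    using assms(1) unfolding smooth_bump_def by blast+
  then have nn: "(\<integral>\<^sup>+x. ennreal (\<theta> x) \<partial>lborel) = 1"
    using nn_integral_has_integral_lborel[of \<theta> 1] by simp
  then have int: "integrable lborel \<theta>" by (intro integrableI_nonneg) (use nonneg in auto)
  have "(\<integral>x. \<theta> x \<partial>lborel) = 1" using integral_eq_nn_integral[of \<theta> lborel] nn nonneg by simp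
  moreover have "(\<integral>x. \<theta> x \<partial>lborel) = \<bar>1/\<delta>\<bar> *\<^sub>R (\<integral>x. \<theta> (0 + (1/\<delta>) * x) \<partial>lborel)"
    using assms(2) by (intro lborel_integral_real_affine) simp
  ultimately show "(\<integral>x. \<theta> (x / \<delta>) / \<delta> \<partial>lborel) = 1" using assms(2) by simp
  show "integrable lborel (\<lambda>x. \<theta> (x / \<delta>) / \<delta>)"
    using lborel_integrable_real_affine[OF int, of "1/\<delta>" 0] assms(2) by simp
qed

definition bump_kernel :: "(real \<Rightarrow> real) \<Rightarrow> real \<Rightarrow> nat \<Rightarrow> (nat \<Rightarrow> real) \<Rightarrow> real" where
  "bump_kernel \<theta> \<delta> p h = (\<Prod>j<p. \<theta> (h j / \<delta>) / \<delta>)"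

lemma bump_kernel_integral:
  assumes "smooth_bump \<theta>" "\<delta> > 0"
  shows "integrable (\<Pi>\<^sub>M j\<in>{..<p}. lborel) (bump_kernel \<theta> \<delta> p)"
    and "integral\<^sup>L (\<Pi>\<^sub>M j\<in>{..<p}. lborel) (bump_kernel \<theta> \<delta> p) = 1"
proof -
  interpret product_sigma_finite "\<lambda>_. lborel" by standard
  note scaled = scaled_bump_integral[OF assms]
  show "integrable (\<Pi>\<^sub>M j\<in>{..<p}. lborel) (bump_kernel \<theta> \<delta> p)"
    unfolding bump_kernel_def by (rule product_integrable_prod) (use scaled in auto)
  have "integral\<^sup>L (\<Pi>\<^sub>M j\<in>{..<p}. lborel) (bump_kernel \<theta> \<delta> p) =
      (\<Prod>j<p. \<integral>x. \<theta> (x / \<delta>) / \<delta> \<partial>lborel)"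
    unfolding bump_kernel_def by (rule product_integral_prod) (use scaled in auto)
  then show "integral\<^sup>L (\<Pi>\<^sub>M j\<in>{..<p}. lborel) (bump_kernel \<theta> \<delta> p) = 1" using scaled by simp
qed

lemma bump_kernel_nonneg: "smooth_bump \<theta> \<Longrightarrow> \<delta> > 0 \<Longrightarrow> 0 \<le> bump_kernel \<theta> \<delta> p h"
  unfolding bump_kernel_def smooth_bump_def by (simp add: prod_nonneg)

lemma bump_kernel_support:
  assumes "smooth_bump \<theta>" "\<delta> > 0" "bump_kernel \<theta> \<delta> p h \<noteq> 0" "j < p"
  shows "\<bar>h j\<bar> \<le> \<delta>"
proof (rule ccontr)
  assume "\<not> \<bar>h j\<bar> \<le> \<delta>"
  then have "1 < \<bar>h j / \<delta>\<bar>" using assms(2) by (simp add: less_divide_eq)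
  then have "\<theta> (h j / \<delta>) = 0" using assms(1) unfolding smooth_bump_def by blast
  then have "bump_kernel \<theta> \<delta> p h = 0" unfolding bump_kernel_def using assms(4) by (auto intro: prod_zero)
  with assms(3) show False by simp
qed

definition max_shifted :: "real list \<Rightarrow> (nat \<Rightarrow> real) \<Rightarrow> real" where
  "max_shifted ts h = Max ((\<lambda>j. ts ! j + h j) ` {..<length ts})"

lemma reg_max_eq_integral:
  "reg_max \<theta> \<delta> ts = integral\<^sup>L (\<Pi>\<^sub>M j\<in>{..<length ts}. lborel)
     (\<lambda>h. max_shifted ts h * bump_kernel \<theta> \<delta> (length ts) h)"
  unfolding reg_max_def max_shifted_def bump_kernel_def by simp

lemma max_shifted_le:
  "ts \<noteq> [] \<Longrightarrow> \<forall>j<length ts. ts ! j \<le> c \<Longrightarrow> \<forall>j<length ts. h j \<le> d \<Longrightarrow> max_shifted ts h \<le> c + d"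
  unfolding max_shifted_def by (subst Max_le_iff) (auto intro: add_mono)

lemma abs_max_shifted_le:
  assumes "ts \<noteq> []" "\<forall>j<length ts. \<bar>ts ! j\<bar> \<le> c" "\<forall>j<length ts. \<bar>h j\<bar> \<le> d"
  shows "\<bar>max_shifted ts h\<bar> \<le> c + d"
proof -
  have "max_shifted ts h \<in> (\<lambda>j. ts ! j + h j) ` {..<length ts}"
    unfolding max_shifted_def using assms(1) by (intro Max_in) auto
  then obtain j where "j < length ts" "max_shifted ts h = ts ! j + h j" by auto
  then show ?thesis using assms(2,3) by force
qed

lemma max_shifted_le_shift:
  assumes "ts \<noteq> []" "length ts' = length ts" "\<forall>j<length ts. ts ! j \<le> ts' ! j + e"
  shows "max_shifted ts h \<le> max_shifted ts' h + e"
  unfolding max_shifted_def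
proof (rule Max.boundedI)
  fix t assume "t \<in> (\<lambda>j. ts ! j + h j) ` {..<length ts}"
  then obtain j where j: "j < length ts" "t = ts ! j + h j" by auto
  then have "ts' ! j + h j \<le> Max ((\<lambda>j. ts' ! j + h j) ` {..<length ts'})"
    using assms(2) by (intro Max_ge) auto
  then show "t \<le> Max ((\<lambda>j. ts' ! j + h j) ` {..<length ts'}) + e" using j assms(3) by force
qed (use assms(1) in auto)

lemma integrable_max_shifted_kernel:
  assumes "smooth_bump \<theta>" "\<delta> > 0" "ts \<noteq> []"
  shows "integrable (\<Pi>\<^sub>M j\<in>{..<length ts}. lborel) (\<lambda>h. max_shifted ts h * bump_kernel \<theta> \<delta> (length ts) h)"
proof -
  let ?M = "\<Pi>\<^sub>M j\<in>{..<length ts}. lborel" and ?K = "bump_kernel \<theta> \<delta> (length ts)"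
  define C where "C = Max ((\<lambda>j. \<bar>ts ! j\<bar>) ` {..<length ts})"
  have C: "\<forall>j<length ts. \<bar>ts ! j\<bar> \<le> C" unfolding C_def by auto
  have K: "integrable ?M ?K" using bump_kernel_integral(1)[OF assms(1,2)] .
  have "max_shifted ts \<in> borel_measurable ?M" unfolding max_shifted_def by measurable
  then have meas: "(\<lambda>h. max_shifted ts h * ?K h) \<in> borel_measurable ?M"
    using borel_measurable_integrable[OF K] by measurable
  have bound: "norm (max_shifted ts h * ?K h) \<le> norm ((C + \<delta>) * ?K h)" for h
  proof (cases "?K h = 0")
    case False
    then have "\<forall>j<length ts. \<bar>h j\<bar> \<le> \<delta>" using bump_kernel_support[OF assms(1,2)] by blast
    then have "\<bar>max_shifted ts h\<bar> \<le> C + \<delta>" using abs_max_shifted_le[OF assms(3) C] by blast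
    then show ?thesis using bump_kernel_nonneg[OF assms(1,2)] by (simp add: abs_mult mult_right_mono)
  qed simp
  show ?thesis
    by (rule Bochner_Integration.integrable_bound[OF integrable_mult_right[OF K, of "C + \<delta>"] meas])
      (use bound in simp)
qed

lemma reg_max_le:
  assumes "smooth_bump \<theta>" "\<delta> > 0" "ts \<noteq> []" "\<forall>j<length ts. ts ! j \<le> c"
  shows "reg_max \<theta> \<delta> ts \<le> c + \<delta>"
proof -
  let ?M = "\<Pi>\<^sub>M j\<in>{..<length ts}. lborel" and ?K = "bump_kernel \<theta> \<delta> (length ts)"
  note K = bump_kernel_integral[OF assms(1,2)]
  have "reg_max \<theta> \<delta> ts \<le> integral\<^sup>L ?M (\<lambda>h. (c + \<delta>) * ?K h)"
    unfolding reg_max_eq_integral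
  proof (rule integral_mono)
    fix h
    show "max_shifted ts h * ?K h \<le> (c + \<delta>) * ?K h"
    proof (cases "?K h = 0")
      case False
      then have "\<forall>j<length ts. h j \<le> \<delta>" using bump_kernel_support[OF assms(1,2)] by fastforce
      then have "max_shifted ts h \<le> c + \<delta>" using max_shifted_le[OF assms(3,4)] by blast
      then show ?thesis using bump_kernel_nonneg[OF assms(1,2)] by (simp add: mult_right_mono)
    qed simp
  qed (use integrable_max_shifted_kernel[OF assms(1-3)] K in auto)
  also have "\<dots> = c + \<delta>" using K by simp
  finally show ?thesis .
qed

lemma reg_max_le_shift:
  assumes "smooth_bump \<theta>" "\<delta> > 0" "ts \<noteq> []" "length ts' = length ts"
    and "\<forall>j<length ts. ts ! j \<le> ts' ! j + e"
  shows "reg_max \<theta> \<delta> ts \<le> reg_max \<theta> \<delta> ts' + e"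
proof -
  let ?M = "\<Pi>\<^sub>M j\<in>{..<length ts}. lborel" and ?K = "bump_kernel \<theta> \<delta> (length ts)"
  note K = bump_kernel_integral[OF assms(1,2)]
  have ts': "ts' \<noteq> []" using assms(3,4) by auto
  have int': "integrable ?M (\<lambda>h. max_shifted ts' h * ?K h)"
    using integrable_max_shifted_kernel[OF assms(1,2) ts'] assms(4) by simp
  have "reg_max \<theta> \<delta> ts \<le> integral\<^sup>L ?M (\<lambda>h. max_shifted ts' h * ?K h + e * ?K h)"
    unfolding reg_max_eq_integral
  proof (rule integral_mono)
    fix h
    have "max_shifted ts h * ?K h \<le> (max_shifted ts' h + e) * ?K h"
      using max_shifted_le_shift[OF assms(3-5)] bump_kernel_nonneg[OF assms(1,2)] by (rule mult_right_mono)
    then show "max_shifted ts h * ?K h \<le> max_shifted ts' h * ?K h + e * ?K h"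
      by (simp add: distrib_right)
  qed (use integrable_max_shifted_kernel[OF assms(1-3)] int' K in auto)
  also have "\<dots> = reg_max \<theta> \<delta> ts' + e"
    using int' K unfolding reg_max_eq_integral assms(4) by simp
  finally show ?thesis .
qed

section \<open>The open covers\<close>

lemma length_sorted_list_of_multiset: "length (sorted_list_of_multiset z) = size z"
  by (metis mset_sorted_list_of_multiset size_mset)

lemma U_set_eq_rho_terms:
  assumes "b > 0" "k \<le> n"
  shows "U_set b a n k =
    {z. size z = n \<and> (\<forall>j\<in>{..<n}. rho_terms b a n k (sorted_list_of_multiset z) ! j < 0)}"
proof -
  have "separates b (sorted_list_of_multiset z) k (a k) \<longleftrightarrow>
      (\<forall>j<n. rho_terms b a n k (sorted_list_of_multiset z) ! j < 0)" if "size z = n" for z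
    using separates_iff_rho_terms_neg[OF _ assms(2)] length_sorted_list_of_multiset that by blast
  then show ?thesis unfolding U_set_eq_separates[OF assms(1)] by auto
qed

lemma U_smooth_eq_reg_max:
  "U_smooth \<theta> \<delta> b a n k = {z. size z = n \<and> reg_max \<theta> \<delta> (rho_terms b a n k (sorted_list_of_multiset z)) < 0}"
  unfolding U_smooth_def rho_eq_reg_max_rho_terms ..

lemma sup_nonexpansive_rho_terms_nth:
  "k \<le> n \<Longrightarrow> j < n \<Longrightarrow> sup_nonexpansive n (\<lambda>xs. rho_terms b a n k xs ! j)"
  unfolding sup_nonexpansive_def using rho_terms_nth_le by blast

lemma sup_nonexpansive_reg_max_rho_terms:
  assumes "smooth_bump \<theta>" "\<delta> > 0" "0 < n" "k \<le> n"
  shows "sup_nonexpansive n (\<lambda>xs. reg_max \<theta> \<delta> (rho_terms b a n k xs))"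
  unfolding sup_nonexpansive_def
proof (intro allI impI)
  fix xs ys :: "real list" and e :: real
  assume H: "length xs = n \<and> length ys = n \<and> (\<forall>i<n. \<bar>xs ! i - ys ! i\<bar> \<le> e)"
  have len: "length (rho_terms b a n k xs) = n" "length (rho_terms b a n k ys) = n"
    using length_rho_terms[OF assms(4)] by blast+
  then have "rho_terms b a n k xs \<noteq> []" using assms(3) by auto
  then show "reg_max \<theta> \<delta> (rho_terms b a n k xs) \<le> reg_max \<theta> \<delta> (rho_terms b a n k ys) + e"
    using len H rho_terms_nth_le[of xs n ys k e _ b a] assms(4)
    by (intro reg_max_le_shift[OF assms(1,2)]) auto
qed

lemma sym_open_U_set: "b > 0 \<Longrightarrow> k \<le> n \<Longrightarrow> sym_open n (U_set b a n k)"
  unfolding U_set_eq_rho_terms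
  by (intro sym_open_sublevels) (auto intro: sup_nonexpansive_rho_terms_nth)

lemma sym_open_U_smooth:
  assumes "smooth_bump \<theta>" "\<delta> > 0" "0 < n" "k \<le> n"
  shows "sym_open n (U_smooth \<theta> \<delta> b a n k)"
  using sym_open_sublevels[of "{()}" n "\<lambda>_ xs. reg_max \<theta> \<delta> (rho_terms b a n k xs)"]
    sup_nonexpansive_reg_max_rho_terms[OF assms]
  unfolding U_smooth_eq_reg_max by simp

lemma rho_terms_margin_exists:
  assumes "length xs = n" "\<epsilon> > 0" "\<forall>i<n. 2 * b + 2 * \<epsilon> \<le> a (Suc i) - a i"
  shows "\<exists>k\<le>n. \<forall>j<n. rho_terms b a n k xs ! j \<le> - \<epsilon>"
proof -
  obtain k where "k \<le> n" "\<forall>m<k. box_hi b (drop m (take k xs)) \<le> a k - \<epsilon>"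
    "\<forall>L. 0 < L \<and> k + L \<le> n \<longrightarrow> a k + \<epsilon> \<le> box_lo b (take L (drop k xs))"
    using exists_separating_index[OF assms] by blast
  then show ?thesis using rho_terms_le_of_margins[OF assms(1)] by blast
qed

lemma U_set_cover:
  assumes "b > 0" "\<epsilon> > 0" "\<forall>i<n. 2 * b + 2 * \<epsilon> \<le> a (Suc i) - a i" "size z = n"
  shows "\<exists>k\<le>n. z \<in> U_set b a n k"
proof -
  have "length (sorted_list_of_multiset z) = n"
    using assms(4) by (simp only: length_sorted_list_of_multiset)
  then obtain k where k: "k \<le> n" "\<forall>j<n. rho_terms b a n k (sorted_list_of_multiset z) ! j \<le> - \<epsilon>"
    using rho_terms_margin_exists[OF _ assms(2,3)] by blast
  have "\<forall>j\<in>{..<n}. rho_terms b a n k (sorted_list_of_multiset z) ! j < 0"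
  proof
    fix j assume "j \<in> {..<n}"
    then have "rho_terms b a n k (sorted_list_of_multiset z) ! j \<le> - \<epsilon>" using k(2) by simp
    then show "rho_terms b a n k (sorted_list_of_multiset z) ! j < 0" using assms(2) by linarith
  qed
  then have "z \<in> U_set b a n k" unfolding U_set_eq_rho_terms[OF assms(1) k(1)] using assms(4) by simp
  then show ?thesis using k(1) by blast
qed

lemma U_smooth_cover:
  assumes "smooth_bump \<theta>" "0 < \<delta>" "\<delta> < \<epsilon>" "\<forall>i<n. 2 * b + 2 * \<epsilon> \<le> a (Suc i) - a i"
    and "0 < n" "size z = n"
  shows "\<exists>k\<le>n. z \<in> U_smooth \<theta> \<delta> b a n k"
proof -
  let ?xs = "sorted_list_of_multiset z"
  have len: "length ?xs = n" using assms(6) by (simp only: length_sorted_list_of_multiset)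
  have "0 < \<epsilon>" using assms(2,3) by simp
  then obtain k where k: "k \<le> n" "\<forall>j<n. rho_terms b a n k ?xs ! j \<le> - \<epsilon>"
    using rho_terms_margin_exists[OF len _ assms(4)] by blast
  have len_k: "length (rho_terms b a n k ?xs) = n" by (rule length_rho_terms[OF k(1)])
  then have "rho_terms b a n k ?xs \<noteq> []" using assms(5) by auto
  then have "reg_max \<theta> \<delta> (rho_terms b a n k ?xs) \<le> - \<epsilon> + \<delta>"
    using k(2) len_k by (intro reg_max_le[OF assms(1,2)]) simp_all
  then have "z \<in> U_smooth \<theta> \<delta> b a n k"
    unfolding U_smooth_eq_reg_max using assms(3,6) by simp
  then show ?thesis using k(1) by blast
qed

lemma uniform_gap:
  assumes "\<forall>i<n. a (Suc i) - a i > 2 * b"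
  obtains \<epsilon> :: real where "\<epsilon> > 0" "\<forall>i<n. 2 * b + 2 * \<epsilon> \<le> a (Suc i) - a i"
proof
  let ?E = "insert 1 ((\<lambda>i. (a (Suc i) - a i - 2 * b) / 2) ` {..<n})"
  show "Min ?E > 0" using assms by (simp add: Min_gr_iff)
  show "\<forall>i<n. 2 * b + 2 * Min ?E \<le> a (Suc i) - a i"
  proof (intro allI impI)
    fix i assume "i < n"
    then have "Min ?E \<le> (a (Suc i) - a i - 2 * b) / 2" by (intro Min_le) auto
    then show "2 * b + 2 * Min ?E \<le> a (Suc i) - a i" by simp
  qed
qed

theorem lemma4p4:
  fixes b :: real and a :: "nat \<Rightarrow> real" and n :: nat and \<theta> :: "real \<Rightarrow> real"
  assumes "b > 0" and "-1 \<le> a 0" and "a n \<le> 1"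
    and "\<forall>i<n. a i < a (Suc i)" and "\<forall>i<n. a (Suc i) - a i > 2 * b"
  shows "(\<forall>i\<le>n. sym_open n (U_set b a n i)) \<and>
         (\<forall>z::real multiset. size z = n \<longrightarrow> (\<exists>i\<le>n. z \<in> U_set b a n i)) \<and>
         (smooth_bump \<theta> \<and> n \<ge> 1 \<longrightarrow>
         (\<exists>\<delta>\<^sub>0>0. \<forall>\<delta>. 0 < \<delta> \<and> \<delta> < \<delta>\<^sub>0 \<longrightarrow>
           (\<forall>k\<le>n. sym_open n (U_smooth \<theta> \<delta> b a n k)) \<and>
           (\<forall>z::real multiset. size z = n \<longrightarrow> (\<exists>k\<le>n. z \<in> U_smooth \<theta> \<delta> b a n k))))"
proof -
  obtain \<epsilon> where \<epsilon>: "\<epsilon> > 0" "\<forall>i<n. 2 * b + 2 * \<epsilon> \<le> a (Suc i) - a i"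
    using uniform_gap[OF assms(5)] by blast
  have smooth_cover: "(\<forall>k\<le>n. sym_open n (U_smooth \<theta> \<delta> b a n k)) \<and>
      (\<forall>z::real multiset. size z = n \<longrightarrow> (\<exists>k\<le>n. z \<in> U_smooth \<theta> \<delta> b a n k))"
    if "smooth_bump \<theta>" "n \<ge> 1" "0 < \<delta>" "\<delta> < \<epsilon>" for \<delta>
    using sym_open_U_smooth[OF that(1,3)] U_smooth_cover[OF that(1,3,4) \<epsilon>(2)] that(2) by simp
  show ?thesis
    using sym_open_U_set[OF assms(1)] U_set_cover[OF assms(1) \<epsilon>] smooth_cover \<epsilon>(1) by blast
qed

end
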